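(* Assume the setting and algorithm described in the context. If $0<\alpha\le\frac{\sqrt n}{\sqrt{8m}\,L}$, then for all $k\ge0$, almost surely, $$\mathbb E\big[\|g^{k+1}-\nabla\mathbf f(x^{k+1})\|^2\,|\,\mathcal F^k\big]\le 8.5L^2\|x^k-Jx^k\|^2+4nL^2t^k+6n\alpha^2L^2\|\overline{\nabla\mathbf f}(x^k)\|^2+4\alpha^2L^2\,\mathbb E\big[\|y^{k+1}-Jy^{k+1}\|^2\,|\,\mathcal F^k\big].$$
   Context: Setting. Let $n,m,p\ge1$ be integers and $\mathcal V=\{1,\dots,n\}$. For each $i\in\mathcal V$ and $j\in\{1,\dots,m\}$, $f_{i,j}:\mathbb R^p\to\mathbb R$ is differentiable and $L$-smooth for some $L>0$, i.e. $\|\nabla f_{i,j}(x)-\nabla f_{i,j}(y)\|\le L\|x-y\|$ for all $x,y\in\mathbb R^p$. Let $f_i:=\frac1m\sum_{j=1}^m f_{i,j}$ and $F:=\frac1n\sum_{i=1}^n f_i$, and assume $F^*:=\inf_{x\in\mathbb R^p}F(x)>-\infty$. Let $\underline W=(\underline w_{ir})\in\mathbb R^{n\times n}$ be a nonnegative, primitive, doubly stochastic matrix ($\underline W\mathbf 1_n=\mathbf 1_n$, $\mathbf 1_n^\top\underline W=\mathbf 1_n^\top$), and let $\lambda\in[0,1)$ be its second largest singular value. Any expression with $\lambda$ in a denominator is read as $+\infty$ when $\lambda=0$. Algorithm GT-SAGA with step-size $\alpha>0$: fix a deterministic $\bar x^0\in\mathbb R^p$; for all $i\in\mathcal V$ set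 $x_i^0=\bar x^0$, $z_{i,j}^0=x_i^0$ for all $j$, $y_i^0=0$, $g_i^{-1}=0$. For $k=0,1,2,\dots$ and every $i\in\mathcal V$: draw $\tau_i^k$ uniformly from $\{1,\dots,m\}$; set $g_i^k=\nabla f_{i,\tau_i^k}(x_i^k)-\nabla f_{i,\tau_i^k}(z_{i,\tau_i^k}^k)+\frac1m\sum_{j=1}^m\nabla f_{i,j}(z_{i,j}^k)$; set $y_i^{k+1}=\sum_{r=1}^n\underline w_{ir}(y_r^k+g_r^k-g_r^{k-1})$; set $x_i^{k+1}=\sum_{r=1}^n\underline w_{ir}(x_r^k-\alpha y_r^{k+1})$; draw $s_i^k$ uniformly from $\{1,\dots,m\}$; set $z_{i,j}^{k+1}=x_i^k$ if $j=s_i^k$ and $z_{i,j}^{k+1}=z_{i,j}^k$ otherwise. The family $\{\tau_i^k,s_i^k: i\in\mathcal V,k\ge0\}$ is independent. Notation. $x^k,y^k,g^k\in\mathbb R^{np}$ stack the $x_i^k$, $y_i^k$, $g_i^k$; $\nabla\mathbf f(x^k)\in\mathbb R^{np}$ stacks $\nabla f_i(x_i^k)$, $i=1,\dots,n$; $W=\underline W\otimes I_p$, $J=(\frac1n\mathbf 1_n\mathbf 1_n^\top)\otimes I_p$; $\bar x^k=\frac1n\sum_i x_i^k$, $\bar g^k=\frac1n\sum_i g_i^k$, $\overline{\nabla\mathbf f}(x^k)=\frac1n\sum_i\nabla f_i(x_i^k)$. $\mathcal F^0$ is the trivial $\sigma$-algebra and $\mathcal F^k=\sigma(\{\tau_i^t,s_i^t:i\in\mathcal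 V,\ t\le k-1\})$ for $k\ge1$. $t^k:=\frac1n\sum_{i=1}^n\frac1m\sum_{j=1}^m\|\bar x^k-z_{i,j}^k\|^2$. $\|\nabla\mathbf f(x^0)\|^2:=\sum_{i=1}^n\|\nabla f_i(\bar x^0)\|^2$. Norms are Euclidean (spectral for matrices); vector and matrix inequalities are entrywise. *)

theory Defs
  imports "HOL-Probability.Probability" "HOL-Probability.Conditional_Expectation"
begin

fun matpow :: "nat \<Rightarrow> (nat \<Rightarrow> nat \<Rightarrow> real) \<Rightarrow> nat \<Rightarrow> nat \<Rightarrow> nat \<Rightarrow> real" where
  "matpow n W 0 = (\<lambda>i j. if i = j then 1 else 0)"
| "matpow n W (Suc k) = (\<lambda>i j. \<Sum>r<n. matpow n W k i r * W r j)"

definition nonneg_mat :: "nat \<Rightarrow> (nat \<Rightarrow> nat \<Rightarrow> real) \<Rightarrow> bool" where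
  "nonneg_mat n W \<longleftrightarrow> (\<forall>i<n. \<forall>j<n. W i j \<ge> 0)"

definition doubly_stochastic :: "nat \<Rightarrow> (nat \<Rightarrow> nat \<Rightarrow> real) \<Rightarrow> bool" where
  "doubly_stochastic n W \<longleftrightarrow> (\<forall>i<n. (\<Sum>r<n. W i r) = 1) \<and> (\<forall>r<n. (\<Sum>i<n. W i r) = 1)"

definition primitive_mat :: "nat \<Rightarrow> (nat \<Rightarrow> nat \<Rightarrow> real) \<Rightarrow> bool" where
  "primitive_mat n W \<longleftrightarrow> (\<exists>k. \<forall>i<n. \<forall>j<n. matpow n W k i j > 0)"

(* local SAGA gradient estimator g_i^k, given the current iterates x, the table z and the
   sampled indices tk (tk i = tau_i^k); component indices are 0..m-1 *)
definition gvec :: "(nat \<Rightarrow> nat \<Rightarrow> 'v \<Rightarrow> 'v::euclidean_space) \<Rightarrow> nat \<Rightarrow>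
    (nat \<Rightarrow> nat \<Rightarrow> 'v) \<Rightarrow> (nat \<Rightarrow> 'v) \<Rightarrow> (nat \<Rightarrow> nat) \<Rightarrow> nat \<Rightarrow> 'v" where
  "gvec grad m z x tk i =
     grad i (tk i) (x i) - grad i (tk i) (z i (tk i)) + (1 / real m) *\<^sub>R (\<Sum>j<m. grad i j (z i j))"

(* GT-SAGA state at iteration k: (x^k, y^k, g^{k-1}, z^k); T k i = tau_i^k, S k i = s_i^k *)
primrec gts :: "(nat \<Rightarrow> nat \<Rightarrow> 'v \<Rightarrow> 'v::euclidean_space) \<Rightarrow> (nat \<Rightarrow> nat \<Rightarrow> real) \<Rightarrow> nat \<Rightarrow> nat \<Rightarrow>
    real \<Rightarrow> 'v \<Rightarrow> (nat \<Rightarrow> nat \<Rightarrow> nat) \<Rightarrow> (nat \<Rightarrow> nat \<Rightarrow> nat) \<Rightarrow> nat \<Rightarrow>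
    (nat \<Rightarrow> 'v) \<times> (nat \<Rightarrow> 'v) \<times> (nat \<Rightarrow> 'v) \<times> (nat \<Rightarrow> nat \<Rightarrow> 'v)" where
  "gts grad W n m \<alpha> x0 T S 0 = ((\<lambda>i. x0), (\<lambda>i. 0), (\<lambda>i. 0), (\<lambda>i j. x0))"
| "gts grad W n m \<alpha> x0 T S (Suc k) =
     (case gts grad W n m \<alpha> x0 T S k of (x, y, gp, z) \<Rightarrow>
        let g = gvec grad m z x (T k);
            y' = (\<lambda>i. \<Sum>r<n. W i r *\<^sub>R (y r + g r - gp r));
            x' = (\<lambda>i. \<Sum>r<n. W i r *\<^sub>R (x r - \<alpha> *\<^sub>R y' r));
            z' = (\<lambda>i j. if j = S k i then x i else z i j)
        in (x', y', g, z'))"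

definition gt_x where "gt_x grad W n m \<alpha> x0 T S k = fst (gts grad W n m \<alpha> x0 T S k)"
definition gt_y where "gt_y grad W n m \<alpha> x0 T S k = fst (snd (gts grad W n m \<alpha> x0 T S k))"
definition gt_z where "gt_z grad W n m \<alpha> x0 T S k = snd (snd (snd (gts grad W n m \<alpha> x0 T S k)))"
definition gt_g where "gt_g grad W n m \<alpha> x0 T S k =
   gvec grad m (gt_z grad W n m \<alpha> x0 T S k) (gt_x grad W n m \<alpha> x0 T S k) (T k)"

(* mean of a stacked vector, and ||v - J v||^2 *)
definition avg :: "nat \<Rightarrow> (nat \<Rightarrow> 'v::real_vector) \<Rightarrow> 'v" where
  "avg n v = (1 / real n) *\<^sub>R (\<Sum>i<n. v i)"

definition cons_err :: "nat \<Rightarrow> (nat \<Rightarrow> 'v::real_normed_vector) \<Rightarrow> real" where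
  "cons_err n v = (\<Sum>i<n. (norm (v i - avg n v))\<^sup>2)"

definition grad_loc :: "(nat \<Rightarrow> nat \<Rightarrow> 'v \<Rightarrow> 'v::real_vector) \<Rightarrow> nat \<Rightarrow> nat \<Rightarrow> 'v \<Rightarrow> 'v" where
  "grad_loc grad m i x = (1 / real m) *\<^sub>R (\<Sum>j<m. grad i j x)"

definition t_gap :: "nat \<Rightarrow> nat \<Rightarrow> (nat \<Rightarrow> 'v::real_normed_vector) \<Rightarrow> (nat \<Rightarrow> nat \<Rightarrow> 'v) \<Rightarrow> real" where
  "t_gap n m x z = (1 / real n) * (\<Sum>i<n. (1 / real m) * (\<Sum>j<m. (norm (avg n x - z i j))\<^sup>2))"

(* F^k = sigma{tau_i^t, s_i^t : i in V, t <= k-1}; trivial for k = 0 *)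
definition filt :: "'w measure \<Rightarrow> (nat \<Rightarrow> nat \<Rightarrow> 'w \<Rightarrow> nat) \<Rightarrow> (nat \<Rightarrow> nat \<Rightarrow> 'w \<Rightarrow> nat) \<Rightarrow> nat \<Rightarrow> nat \<Rightarrow> 'w measure" where
  "filt M tau s n k = sigma (space M)
     (\<Union>t<k. \<Union>i<n. {tau t i -` A \<inter> space M | A. True} \<union> {s t i -` A \<inter> space M | A. True})"

end

theory Submission
  imports Defs
begin

(* Conditionally on F^k, the only randomness left in g^{k+1} - grad f(x^{k+1}) is the triple of
   index vectors (tau^k, s^k, tau^{k+1}), which is independent of F^k and uniform on ({0..<m}^n)^3;
   so the conditional expectation is the average of a deterministic quantity over all such triples.
   Averaging over tau^{k+1} bounds the SAGA error by L^2 times the distances from x^{k+1} to the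
   gradient table z^{k+1}; averaging over s^k trades z^{k+1} for x^k and z^k. The network mean moves
   by x-bar^{k+1} - x-bar^k = -alpha g-bar^k, and averaging over tau^k splits |g-bar^k|^2 into the
   mean gradient and a noise term which, being a mean of n independent centred terms, is of order
   L^2 (|x^k - Jx^k|^2 + n t^k) / n^2. The step-size condition alpha^2 L^2 <= n / (8m) absorbs the
   noise term into the constants 8.5 and 4. *)

section \<open>Squared norms of averages\<close>

lemma weighted_variance_eq:
  fixes w :: "'a \<Rightarrow> 'v::real_inner"
  assumes "(\<Sum>a\<in>A. c a) = 1"
  shows "(\<Sum>a\<in>A. c a * (norm (w a - (\<Sum>b\<in>A. c b *\<^sub>R w b)))\<^sup>2)
       = (\<Sum>a\<in>A. c a * (norm (w a))\<^sup>2) - (norm (\<Sum>b\<in>A. c b *\<^sub>R w b))\<^sup>2"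
proof -
  define \<mu> where "\<mu> = (\<Sum>b\<in>A. c b *\<^sub>R w b)"
  have sq: "(norm (w a - \<mu>))\<^sup>2 = (norm (w a))\<^sup>2 - 2 * (w a \<bullet> \<mu>) + (norm \<mu>)\<^sup>2" for a
    by (simp add: power2_norm_eq_inner inner_diff_left inner_diff_right inner_commute)
  have "(\<Sum>a\<in>A. c a * (norm (w a - \<mu>))\<^sup>2)
      = (\<Sum>a\<in>A. c a * (norm (w a))\<^sup>2) - 2 * (\<Sum>a\<in>A. c a * (w a \<bullet> \<mu>)) + (\<Sum>a\<in>A. c a) * (norm \<mu>)\<^sup>2"
    by (simp add: sq algebra_simps sum.distrib sum_subtractf sum_distrib_left sum_distrib_right)
  also have "(\<Sum>a\<in>A. c a * (w a \<bullet> \<mu>)) = \<mu> \<bullet> \<mu>"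
    unfolding \<mu>_def by (simp add: inner_sum_left)
  finally show ?thesis
    using assms unfolding \<mu>_def[symmetric] by (simp add: power2_norm_eq_inner)
qed

lemma norm_sum_weighted_sq_le:
  fixes w :: "'a \<Rightarrow> 'v::real_inner"
  assumes "(\<Sum>a\<in>A. c a) = 1" "\<And>a. a \<in> A \<Longrightarrow> c a \<ge> 0"
  shows "(norm (\<Sum>a\<in>A. c a *\<^sub>R w a))\<^sup>2 \<le> (\<Sum>a\<in>A. c a * (norm (w a))\<^sup>2)"
proof -
  have "0 \<le> (\<Sum>a\<in>A. c a * (norm (w a - (\<Sum>b\<in>A. c b *\<^sub>R w b)))\<^sup>2)"
    using assms(2) by (intro sum_nonneg) auto
  then show ?thesis
    using weighted_variance_eq[OF assms(1), of w] by linarith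
qed

lemma sum_norm_sq_centred_le:
  fixes a :: "'b \<Rightarrow> 'v::real_inner"
  assumes "finite A" "A \<noteq> {}"
  shows "(\<Sum>j\<in>A. (norm (a j - (1 / real (card A)) *\<^sub>R (\<Sum>j'\<in>A. a j')))\<^sup>2) \<le> (\<Sum>j\<in>A. (norm (a j))\<^sup>2)"
proof -
  have c: "real (card A) > 0"
    using assms by (simp add: card_gt_0_iff)
  have "(\<Sum>j\<in>A. 1 / real (card A) * (norm (a j - (\<Sum>j'\<in>A. (1 / real (card A)) *\<^sub>R a j')))\<^sup>2)
      \<le> (\<Sum>j\<in>A. 1 / real (card A) * (norm (a j))\<^sup>2)"
    using weighted_variance_eq[of "\<lambda>_. 1 / real (card A)" A a] c by simp
  then show ?thesis
    using c by (simp add: scaleR_sum_right sum_divide_distrib[symmetric] divide_le_cancel)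
qed

lemma sum_centred_eq_0:
  fixes a :: "'b \<Rightarrow> 'v::real_vector"
  assumes "finite A" "A \<noteq> {}"
  shows "(\<Sum>j\<in>A. a j - (1 / real (card A)) *\<^sub>R (\<Sum>j'\<in>A. a j')) = 0"
  using assms by (simp add: sum_subtractf sum_constant_scaleR card_gt_0_iff)

lemma norm_add_sq_le:
  fixes a b :: "'v::real_normed_vector"
  shows "(norm (a + b))\<^sup>2 \<le> 2 * (norm a)\<^sup>2 + 2 * (norm b)\<^sup>2"
proof -
  have "(norm (a + b))\<^sup>2 \<le> (norm a + norm b)\<^sup>2"
    by (simp add: norm_triangle_ineq power_mono)
  also have "\<dots> \<le> 2 * (norm a)\<^sup>2 + 2 * (norm b)\<^sup>2"
    using zero_le_power2[of "norm a - norm b"] by (simp add: power2_sum power2_diff)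
  finally show ?thesis .
qed

lemma norm_diff_sq_le:
  fixes a b :: "'v::real_normed_vector"
  shows "(norm (a - b))\<^sup>2 \<le> 2 * (norm a)\<^sup>2 + 2 * (norm b)\<^sup>2"
  using norm_add_sq_le[of a "- b"] by simp

section \<open>Network averages and consensus error\<close>

lemma avg_diff: "avg n (\<lambda>i. a i - b i) = avg n a - avg n b"
  by (simp add: avg_def sum_subtractf scaleR_diff_right sum_constant_scaleR)

lemma avg_add: "avg n (\<lambda>i. a i + b i) = avg n a + avg n b"
  by (simp add: avg_def sum.distrib scaleR_add_right)

lemma avg_scaleR: "avg n (\<lambda>i. c *\<^sub>R a i) = c *\<^sub>R avg n a"
  by (simp add: avg_def scaleR_sum_right[symmetric])

lemma cons_err_nonneg: "cons_err n v \<ge> 0"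
  unfolding cons_err_def by (intro sum_nonneg) auto

lemma cons_err_scaleR: "cons_err n (\<lambda>i. c *\<^sub>R a i) = c\<^sup>2 * cons_err n a"
  unfolding cons_err_def avg_scaleR
  by (simp add: scaleR_diff_right[symmetric] sum_distrib_left power_mult_distrib)

lemma cons_err_diff_le: "cons_err n (\<lambda>i. a i - b i) \<le> 2 * cons_err n a + 2 * cons_err n b"
proof -
  have "cons_err n (\<lambda>i. a i - b i) = (\<Sum>i<n. (norm ((a i - avg n a) - (b i - avg n b)))\<^sup>2)"
    unfolding cons_err_def avg_diff by (simp add: algebra_simps)
  also have "\<dots> \<le> (\<Sum>i<n. 2 * (norm (a i - avg n a))\<^sup>2 + 2 * (norm (b i - avg n b))\<^sup>2)"
    by (intro sum_mono norm_diff_sq_le)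
  finally show ?thesis
    by (simp add: cons_err_def sum.distrib sum_distrib_left)
qed

lemma sum_norm_sq_eq_cons_err:
  fixes v :: "nat \<Rightarrow> 'v::real_inner"
  shows "(\<Sum>i<n. (norm (v i - c))\<^sup>2) = cons_err n v + real n * (norm (avg n v - c))\<^sup>2"
proof (cases "n = 0")
  case False
  then have n: "real n > 0" by simp
  have "(\<Sum>i<n. 1 / real n * (norm ((v i - c) - (avg n v - c)))\<^sup>2)
     = (\<Sum>i<n. 1 / real n * (norm (v i - c))\<^sup>2) - (norm (avg n v - c))\<^sup>2"
  proof -
    have "(\<Sum>i<n. (1 / real n) *\<^sub>R (v i - c)) = avg n v - c"
      using n by (simp add: avg_def scaleR_sum_right[symmetric] sum_subtractf scaleR_diff_right sum_constant_scaleR)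
    moreover have "(\<Sum>i<n. 1 / real n) = 1"
      using n by simp
    ultimately show ?thesis
      using weighted_variance_eq[of "\<lambda>_. 1 / real n" "{..<n}" "\<lambda>i. v i - c"] by simp
  qed
  then have "cons_err n v / real n = (\<Sum>i<n. (norm (v i - c))\<^sup>2) / real n - (norm (avg n v - c))\<^sup>2"
    by (simp add: cons_err_def sum_divide_distrib)
  then show ?thesis
    using n by (simp add: field_simps)
qed (simp add: cons_err_def)

lemma sum_norm_diff_sq_le:
  fixes X x :: "nat \<Rightarrow> 'v::real_inner"
  shows "(\<Sum>i<n. (norm (X i - x i))\<^sup>2)
       \<le> 2 * cons_err n X + 2 * cons_err n x + real n * (norm (avg n X - avg n x))\<^sup>2"
  using sum_norm_sq_eq_cons_err[where v = "\<lambda>i. X i - x i" and c = 0 and n = n] cons_err_diff_le[of n X x]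
  by (simp add: avg_diff)

lemma t_gap_nonneg: "t_gap n m x z \<ge> 0"
  unfolding t_gap_def by (intro mult_nonneg_nonneg sum_nonneg) auto

lemma sum_table_dist_le:
  fixes X x :: "nat \<Rightarrow> 'v::real_inner" and z :: "nat \<Rightarrow> nat \<Rightarrow> 'v"
  assumes "m > 0"
  shows "(\<Sum>i<n. (1 / real m) * (\<Sum>j<m. (norm (X i - z i j))\<^sup>2))
     \<le> 2 * cons_err n X + 2 * real n * (norm (avg n X - avg n x))\<^sup>2 + 2 * real n * t_gap n m x z"
proof -
  have "(\<Sum>i<n. (1 / real m) * (\<Sum>j<m. (norm (X i - z i j))\<^sup>2))
     \<le> (\<Sum>i<n. (1 / real m) * (\<Sum>j<m. 2 * (norm (X i - avg n x))\<^sup>2 + 2 * (norm (avg n x - z i j))\<^sup>2))"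
    using norm_add_sq_le[of "X _ - avg n x" "avg n x - z _ _"]
    by (intro sum_mono mult_left_mono) auto
  also have "\<dots> = 2 * (\<Sum>i<n. (norm (X i - avg n x))\<^sup>2)
      + 2 * (\<Sum>i<n. (1 / real m) * (\<Sum>j<m. (norm (avg n x - z i j))\<^sup>2))"
  proof -
    have "(1 / real m) * (\<Sum>j<m. 2 * (norm (X i - avg n x))\<^sup>2 + 2 * (norm (avg n x - z i j))\<^sup>2)
        = 2 * (norm (X i - avg n x))\<^sup>2 + 2 * ((1 / real m) * (\<Sum>j<m. (norm (avg n x - z i j))\<^sup>2))" for i
      using assms by (simp add: sum.distrib sum_distrib_left[symmetric] field_simps)
    then show ?thesis
      by (simp add: sum.distrib sum_distrib_left)
  qed
  also have "(\<Sum>i<n. (norm (X i - avg n x))\<^sup>2) = cons_err n X + real n * (norm (avg n X - avg n x))\<^sup>2"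
    by (rule sum_norm_sq_eq_cons_err)
  also have "(\<Sum>i<n. (1 / real m) * (\<Sum>j<m. (norm (avg n x - z i j))\<^sup>2)) = real n * t_gap n m x z"
    by (cases "n = 0") (simp_all add: t_gap_def)
  finally show ?thesis
    by (simp add: algebra_simps)
qed

lemma avg_doubly_stochastic:
  assumes "doubly_stochastic n W"
  shows "avg n (\<lambda>i. \<Sum>r<n. W i r *\<^sub>R v r) = avg n v"
proof -
  have "(\<Sum>i<n. \<Sum>r<n. W i r *\<^sub>R v r) = (\<Sum>r<n. (\<Sum>i<n. W i r) *\<^sub>R v r)"
    by (subst sum.swap) (simp add: scaleR_sum_left)
  also have "\<dots> = (\<Sum>r<n. v r)"
    using assms by (simp add: doubly_stochastic_def)
  finally show ?thesis
    by (simp add: avg_def)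
qed

text \<open>Each row of \<open>W\<close> is a probability vector, so Jensen applies row by row; summing
  over rows uses the column sums.\<close>

lemma cons_err_doubly_stochastic_le:
  fixes v :: "nat \<Rightarrow> 'v::real_inner"
  assumes ds: "doubly_stochastic n W" and nonneg: "nonneg_mat n W"
  shows "cons_err n (\<lambda>i. \<Sum>r<n. W i r *\<^sub>R v r) \<le> cons_err n v"
proof -
  have row: "(\<Sum>r<n. W i r *\<^sub>R v r) - avg n v = (\<Sum>r<n. W i r *\<^sub>R (v r - avg n v))" if "i < n" for i
    using ds that
    by (simp add: scaleR_diff_right sum_subtractf scaleR_sum_left[symmetric] doubly_stochastic_def)
  have "cons_err n (\<lambda>i. \<Sum>r<n. W i r *\<^sub>R v r) = (\<Sum>i<n. (norm (\<Sum>r<n. W i r *\<^sub>R (v r - avg n v)))\<^sup>2)"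
    unfolding cons_err_def avg_doubly_stochastic[OF ds] using row by simp
  also have "\<dots> \<le> (\<Sum>i<n. \<Sum>r<n. W i r * (norm (v r - avg n v))\<^sup>2)"
    using ds nonneg
    by (intro sum_mono norm_sum_weighted_sq_le) (auto simp: doubly_stochastic_def nonneg_mat_def)
  also have "\<dots> = (\<Sum>r<n. (\<Sum>i<n. W i r) * (norm (v r - avg n v))\<^sup>2)"
    by (subst sum.swap) (simp add: sum_distrib_right)
  also have "\<dots> = cons_err n v"
    using ds by (simp add: doubly_stochastic_def cons_err_def)
  finally show ?thesis .
qed

section \<open>Sums over all index vectors\<close>

lemma sum_if_eq_const:
  assumes "finite A" "j \<in> A"
  shows "(\<Sum>j'\<in>A. if j = j' then a else b) = a + (real (card A) - 1) * (b::real)"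
proof -
  have "(\<Sum>j'\<in>A. if j = j' then a else b) = (\<Sum>j'\<in>A. b + (if j = j' then a - b else 0))"
    by (intro sum.cong) auto
  also have "\<dots> = real (card A) * b + (a - b)"
    using assms by (simp add: sum.distrib)
  finally show ?thesis
    by (simp add: algebra_simps)
qed

lemma sum_PiE_remove_coord:
  assumes "finite I" "i \<in> I"
  shows "(\<Sum>u\<in>PiE I (\<lambda>_. A). F u) = (\<Sum>a\<in>A. \<Sum>u\<in>PiE (I - {i}) (\<lambda>_. A). F (u(i := a)))"
proof -
  have "PiE I (\<lambda>_. A) = (\<lambda>(a, u). u(i := a)) ` (A \<times> PiE (I - {i}) (\<lambda>_. A))"
    using PiE_insert_eq[of i "I - {i}" "\<lambda>_. A"] assms(2) by (simp add: insert_absorb)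
  moreover have "inj_on (\<lambda>(a, u). u(i := a)) (A \<times> PiE (I - {i}) (\<lambda>_. A))"
    by (rule inj_combinator) simp
  ultimately show ?thesis
    by (simp add: sum.reindex sum.cartesian_product prod.case_distrib)
qed

lemma sum_PiE_coord:
  fixes f :: "'b \<Rightarrow> real"
  assumes "finite I" "finite A" "i \<in> I"
  shows "(\<Sum>u\<in>PiE I (\<lambda>_. A). f (u i)) = real (card A) ^ (card I - 1) * (\<Sum>a\<in>A. f a)"
  using assms
  by (simp add: sum_PiE_remove_coord[OF assms(1,3)] card_PiE sum_distrib_right mult.commute)

lemma sum_PiE_two_coords:
  fixes f :: "'b \<Rightarrow> 'b \<Rightarrow> real"
  assumes "finite I" "finite A" "i \<in> I" "l \<in> I" "i \<noteq> l"
  shows "(\<Sum>u\<in>PiE I (\<lambda>_. A). f (u i) (u l)) = real (card A) ^ (card I - 2) * (\<Sum>a\<in>A. \<Sum>b\<in>A. f a b)"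
proof -
  have "(\<Sum>u\<in>PiE I (\<lambda>_. A). f (u i) (u l)) = (\<Sum>a\<in>A. \<Sum>u\<in>PiE (I - {i}) (\<lambda>_. A). f a (u l))"
    using assms by (simp add: sum_PiE_remove_coord[OF assms(1,3)])
  also have "\<dots> = (\<Sum>a\<in>A. real (card A) ^ (card I - 2) * (\<Sum>b\<in>A. f a b))"
    using assms by (intro sum.cong refl) (simp add: sum_PiE_coord card_Diff_singleton numeral_2_eq_2)
  finally show ?thesis
    by (simp add: sum_distrib_left)
qed

text \<open>Independent, centred coordinates: the cross terms of the square vanish.\<close>

lemma sum_PiE_norm_sum_sq:
  fixes d :: "'i \<Rightarrow> 'b \<Rightarrow> 'v::real_inner"
  assumes "finite I" "finite A" and centred: "\<And>i. i \<in> I \<Longrightarrow> (\<Sum>a\<in>A. d i a) = 0"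
  shows "(\<Sum>u\<in>PiE I (\<lambda>_. A). (norm (\<Sum>i\<in>I. d i (u i)))\<^sup>2)
       = real (card A) ^ (card I - 1) * (\<Sum>i\<in>I. \<Sum>a\<in>A. (norm (d i a))\<^sup>2)"
proof -
  have cross: "(\<Sum>u\<in>PiE I (\<lambda>_. A). d i (u i) \<bullet> d l (u l))
      = (if i = l then real (card A) ^ (card I - 1) * (\<Sum>a\<in>A. (norm (d i a))\<^sup>2) else 0)"
    if "i \<in> I" "l \<in> I" for i l
  proof (cases "i = l")
    case True
    then show ?thesis
      using assms that sum_PiE_coord[of I A i "\<lambda>a. d i a \<bullet> d i a"] by (simp add: power2_norm_eq_inner)
  next
    case False
    have "(\<Sum>a\<in>A. \<Sum>b\<in>A. d i a \<bullet> d l b) = (\<Sum>a\<in>A. d i a) \<bullet> (\<Sum>b\<in>A. d l b)"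
      by (simp only: inner_sum_left) (simp only: inner_sum_right)
    then show ?thesis
      using sum_PiE_two_coords[OF assms(1,2) that False, of "\<lambda>a b. d i a \<bullet> d l b"] centred that False
      by simp
  qed
  have "(\<Sum>u\<in>PiE I (\<lambda>_. A). (norm (\<Sum>i\<in>I. d i (u i)))\<^sup>2)
      = (\<Sum>i\<in>I. \<Sum>l\<in>I. \<Sum>u\<in>PiE I (\<lambda>_. A). d i (u i) \<bullet> d l (u l))"
    by (simp add: power2_norm_eq_inner inner_sum_left inner_sum_right sum.swap[where A = "PiE _ _"])
      (rule sum.swap)
  also have "\<dots> = (\<Sum>i\<in>I. real (card A) ^ (card I - 1) * (\<Sum>a\<in>A. (norm (d i a))\<^sup>2))"
    using assms(1) by (simp add: cross)
  finally show ?thesis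
    by (simp add: sum_distrib_left)
qed

section \<open>One step of GT-SAGA\<close>

definition y_update ::
    "(nat \<Rightarrow> nat \<Rightarrow> real) \<Rightarrow> nat \<Rightarrow> (nat \<Rightarrow> 'v) \<Rightarrow> (nat \<Rightarrow> 'v) \<Rightarrow> (nat \<Rightarrow> 'v) \<Rightarrow> nat \<Rightarrow> 'v::real_vector"
  where "y_update W n y g gp = (\<lambda>i. \<Sum>r<n. W i r *\<^sub>R (y r + g r - gp r))"

definition x_update ::
    "(nat \<Rightarrow> nat \<Rightarrow> real) \<Rightarrow> nat \<Rightarrow> real \<Rightarrow> (nat \<Rightarrow> 'v) \<Rightarrow> (nat \<Rightarrow> 'v) \<Rightarrow> nat \<Rightarrow> 'v::real_vector"
  where "x_update W n \<alpha> x y = (\<lambda>i. \<Sum>r<n. W i r *\<^sub>R (x r - \<alpha> *\<^sub>R y r))"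

definition table_update :: "(nat \<Rightarrow> 'v) \<Rightarrow> (nat \<Rightarrow> nat \<Rightarrow> 'v) \<Rightarrow> (nat \<Rightarrow> nat) \<Rightarrow> nat \<Rightarrow> nat \<Rightarrow> 'v"
  where "table_update x z u = (\<lambda>i j. if j = u i then x i else z i j)"

definition saga_err ::
    "(nat \<Rightarrow> nat \<Rightarrow> 'v \<Rightarrow> 'v::euclidean_space) \<Rightarrow> nat \<Rightarrow> nat \<Rightarrow> (nat \<Rightarrow> nat \<Rightarrow> 'v) \<Rightarrow> (nat \<Rightarrow> 'v) \<Rightarrow> (nat \<Rightarrow> nat) \<Rightarrow> real"
  where "saga_err grad n m z x u = (\<Sum>i<n. (norm (gvec grad m z x u i - grad_loc grad m i (x i)))\<^sup>2)"

definition saga_err_bound ::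
    "(nat \<Rightarrow> nat \<Rightarrow> 'v \<Rightarrow> 'v::euclidean_space) \<Rightarrow> nat \<Rightarrow> nat \<Rightarrow> real \<Rightarrow> real \<Rightarrow> (nat \<Rightarrow> 'v) \<Rightarrow> (nat \<Rightarrow> nat \<Rightarrow> 'v) \<Rightarrow> real"
  where "saga_err_bound grad n m \<alpha> L x z = 8.5 * L\<^sup>2 * cons_err n x + 4 * real n * L\<^sup>2 * t_gap n m x z
    + 6 * real n * \<alpha>\<^sup>2 * L\<^sup>2 * (norm (avg n (\<lambda>i. grad_loc grad m i (x i))))\<^sup>2"

lemma avg_y_update:
  assumes "doubly_stochastic n W"
  shows "avg n (y_update W n y g gp) = avg n y + avg n g - avg n gp"
  by (simp add: y_update_def avg_doubly_stochastic[OF assms] avg_diff avg_add)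

lemma avg_x_update:
  assumes "doubly_stochastic n W"
  shows "avg n (x_update W n \<alpha> x y) = avg n x - \<alpha> *\<^sub>R avg n y"
  by (simp add: x_update_def avg_doubly_stochastic[OF assms] avg_diff avg_scaleR)

lemma cons_err_x_update_le:
  fixes x y :: "nat \<Rightarrow> 'v::real_inner"
  assumes "doubly_stochastic n W" "nonneg_mat n W"
  shows "cons_err n (x_update W n \<alpha> x y) \<le> 2 * cons_err n x + 2 * \<alpha>\<^sup>2 * cons_err n y"
proof -
  have "cons_err n (x_update W n \<alpha> x y) \<le> cons_err n (\<lambda>r. x r - \<alpha> *\<^sub>R y r)"
    unfolding x_update_def by (rule cons_err_doubly_stochastic_le[OF assms])
  also have "\<dots> \<le> 2 * cons_err n x + 2 * cons_err n (\<lambda>r. \<alpha> *\<^sub>R y r)"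
    by (rule cons_err_diff_le)
  finally show ?thesis
    by (simp add: cons_err_scaleR)
qed

definition gt_g_prev where "gt_g_prev grad W n m \<alpha> x0 T S k = fst (snd (snd (gts grad W n m \<alpha> x0 T S k)))"

lemma gt_0:
  "gt_y grad W n m \<alpha> x0 T S 0 = (\<lambda>i. 0)" "gt_g_prev grad W n m \<alpha> x0 T S 0 = (\<lambda>i. 0)"
  by (simp_all add: gt_y_def gt_g_prev_def)

lemma gt_Suc:
  "gt_y grad W n m \<alpha> x0 T S (Suc k) = y_update W n (gt_y grad W n m \<alpha> x0 T S k)
      (gt_g grad W n m \<alpha> x0 T S k) (gt_g_prev grad W n m \<alpha> x0 T S k)"
  "gt_x grad W n m \<alpha> x0 T S (Suc k) = x_update W n \<alpha> (gt_x grad W n m \<alpha> x0 T S k)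
      (gt_y grad W n m \<alpha> x0 T S (Suc k))"
  "gt_g_prev grad W n m \<alpha> x0 T S (Suc k) = gt_g grad W n m \<alpha> x0 T S k"
  "gt_z grad W n m \<alpha> x0 T S (Suc k) = table_update (gt_x grad W n m \<alpha> x0 T S k)
      (gt_z grad W n m \<alpha> x0 T S k) (S k)"
  unfolding gt_x_def gt_y_def gt_g_prev_def gt_z_def gt_g_def y_update_def x_update_def table_update_def
  by (simp_all add: Let_def prod.case_eq_if)

lemma avg_gt_y:
  assumes "doubly_stochastic n W"
  shows "avg n (gt_y grad W n m \<alpha> x0 T S k) = avg n (gt_g_prev grad W n m \<alpha> x0 T S k)"
proof (induction k)
  case 0
  then show ?case
    by (simp add: gt_0 avg_def)
next
  case (Suc k)
  then show ?case
    by (simp add: gt_Suc avg_y_update[OF assms])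
qed

lemma gts_prefix:
  assumes "\<forall>t<K. T t = T' t \<and> S t = S' t"
  shows "gts grad W n m \<alpha> x0 T S K = gts grad W n m \<alpha> x0 T' S' K"
  using assms by (induction K) (auto simp: Let_def split: prod.split)

lemma gt_prefix:
  assumes "\<forall>t<K. T t = T' t \<and> S t = S' t"
  shows "gt_x grad W n m \<alpha> x0 T S K = gt_x grad W n m \<alpha> x0 T' S' K"
    "gt_y grad W n m \<alpha> x0 T S K = gt_y grad W n m \<alpha> x0 T' S' K"
    "gt_g_prev grad W n m \<alpha> x0 T S K = gt_g_prev grad W n m \<alpha> x0 T' S' K"
    "gt_z grad W n m \<alpha> x0 T S K = gt_z grad W n m \<alpha> x0 T' S' K"
  using gts_prefix[OF assms, of grad W n m \<alpha> x0]
  by (simp_all add: gt_x_def gt_y_def gt_g_prev_def gt_z_def)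

lemma gt_agree_on_nodes:
  assumes "\<forall>t<K. \<forall>i<n. T t i = T' t i \<and> S t i = S' t i" "i < n"
  shows "gt_x grad W n m \<alpha> x0 T S K i = gt_x grad W n m \<alpha> x0 T' S' K i \<and>
         gt_y grad W n m \<alpha> x0 T S K i = gt_y grad W n m \<alpha> x0 T' S' K i \<and>
         gt_g_prev grad W n m \<alpha> x0 T S K i = gt_g_prev grad W n m \<alpha> x0 T' S' K i \<and>
         gt_z grad W n m \<alpha> x0 T S K i = gt_z grad W n m \<alpha> x0 T' S' K i"
  using assms
proof (induction K arbitrary: i)
  case 0
  then show ?case
    by (simp add: gt_x_def gt_y_def gt_g_prev_def gt_z_def)
next
  case (Suc K)
  have IH: "gt_x grad W n m \<alpha> x0 T S K r = gt_x grad W n m \<alpha> x0 T' S' K r \<and>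
         gt_y grad W n m \<alpha> x0 T S K r = gt_y grad W n m \<alpha> x0 T' S' K r \<and>
         gt_g_prev grad W n m \<alpha> x0 T S K r = gt_g_prev grad W n m \<alpha> x0 T' S' K r \<and>
         gt_z grad W n m \<alpha> x0 T S K r = gt_z grad W n m \<alpha> x0 T' S' K r" if "r < n" for r
    using Suc.IH Suc.prems that by auto
  have TS: "T K r = T' K r \<and> S K r = S' K r" if "r < n" for r
    using Suc.prems that by auto
  have g: "gt_g grad W n m \<alpha> x0 T S K r = gt_g grad W n m \<alpha> x0 T' S' K r" if "r < n" for r
    using IH[OF that] TS[OF that] by (simp add: gt_g_def gvec_def)
  have y: "gt_y grad W n m \<alpha> x0 T S (Suc K) r = gt_y grad W n m \<alpha> x0 T' S' (Suc K) r" for r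
    unfolding gt_Suc y_update_def using IH g by (intro sum.cong refl) auto
  show ?case
    unfolding gt_Suc(2-4) x_update_def table_update_def
    using Suc.prems IH g y TS by (auto intro!: sum.cong ext)
qed

definition est_err where
  "est_err grad W n m \<alpha> x0 k T S = saga_err grad n m (gt_z grad W n m \<alpha> x0 T S (Suc k))
     (gt_x grad W n m \<alpha> x0 T S (Suc k)) (T (Suc k))"

definition track_err where
  "track_err grad W n m \<alpha> x0 k T S = cons_err n (gt_y grad W n m \<alpha> x0 T S (Suc k))"

lemma est_err_cong:
  assumes "\<forall>t<Suc k. \<forall>i<n. T t i = T' t i \<and> S t i = S' t i" "\<forall>i<n. T (Suc k) i = T' (Suc k) i"
  shows "est_err grad W n m \<alpha> x0 k T S = est_err grad W n m \<alpha> x0 k T' S'"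
  unfolding est_err_def saga_err_def
  using gt_agree_on_nodes[OF assms(1), of _ grad W m \<alpha> x0] assms(2)
  by (intro sum.cong refl) (simp add: gvec_def)

lemma track_err_cong:
  assumes "\<forall>t<k. \<forall>i<n. T t i = T' t i \<and> S t i = S' t i" "\<forall>i<n. T k i = T' k i"
  shows "track_err grad W n m \<alpha> x0 k T S = track_err grad W n m \<alpha> x0 k T' S'"
proof -
  note agree = gt_agree_on_nodes[OF assms(1), of _ grad W m \<alpha> x0]
  have "gt_g grad W n m \<alpha> x0 T S k r = gt_g grad W n m \<alpha> x0 T' S' k r" if "r < n" for r
    using agree[OF that] assms(2) that by (simp add: gt_g_def gvec_def)
  then have "gt_y grad W n m \<alpha> x0 T S (Suc k) = gt_y grad W n m \<alpha> x0 T' S' (Suc k)"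
    unfolding gt_Suc y_update_def using agree by (intro ext sum.cong) auto
  then show ?thesis
    by (simp add: track_err_def)
qed

section \<open>The one-step bound averaged over the sampled indices\<close>

locale gt_saga =
  fixes grad :: "nat \<Rightarrow> nat \<Rightarrow> 'v::euclidean_space \<Rightarrow> 'v" and W :: "nat \<Rightarrow> nat \<Rightarrow> real"
    and n m :: nat and \<alpha> L :: real
  assumes n_pos: "n \<ge> 1" and m_pos: "m \<ge> 1" and L_pos: "L > 0"
    and lipschitz: "\<And>i j x y. i < n \<Longrightarrow> j < m \<Longrightarrow> norm (grad i j x - grad i j y) \<le> L * norm (x - y)"
    and nonneg: "nonneg_mat n W" and ds: "doubly_stochastic n W"
    and alpha_pos: "\<alpha> > 0" and step_size: "\<alpha> \<le> sqrt (real n) / (sqrt (8 * real m) * L)"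
begin

lemma alpha_L_sq_le: "\<alpha>\<^sup>2 * L\<^sup>2 \<le> real n / 8"
proof -
  have m: "real m \<ge> 1"
    using m_pos by simp
  have "\<alpha> * L \<le> sqrt (real n) / sqrt (8 * real m)"
    using mult_right_mono[OF step_size, of L] L_pos by simp
  then have "(\<alpha> * L)\<^sup>2 \<le> (sqrt (real n) / sqrt (8 * real m))\<^sup>2"
    using alpha_pos L_pos by (intro power_mono) auto
  also have "\<dots> = real n / (8 * real m)"
    using m by (simp add: power_divide)
  also have "\<dots> \<le> real n / 8"
    using m by (intro divide_left_mono) auto
  finally show ?thesis
    by (simp add: power_mult_distrib)
qed

definition saga_dev :: "nat \<Rightarrow> 'v \<Rightarrow> (nat \<Rightarrow> 'v) \<Rightarrow> nat \<Rightarrow> 'v" where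
  "saga_dev i x z j = (grad i j x - grad i j (z j)) - (1 / real m) *\<^sub>R (\<Sum>j'<m. grad i j' x - grad i j' (z j'))"

lemma gvec_minus_grad_loc: "gvec grad m z x u i - grad_loc grad m i (x i) = saga_dev i (x i) (z i) (u i)"
  by (simp add: gvec_def grad_loc_def saga_dev_def sum_subtractf scaleR_diff_right algebra_simps)

lemma sum_saga_dev: "(\<Sum>j<m. saga_dev i x z j) = 0"
  unfolding saga_dev_def using sum_centred_eq_0[of "{..<m}" "\<lambda>j. grad i j x - grad i j (z j)"] m_pos
  by (simp add: lessThan_empty_iff)

lemma sum_norm_saga_dev_sq_le:
  assumes "i < n"
  shows "(\<Sum>j<m. (norm (saga_dev i x z j))\<^sup>2) \<le> L\<^sup>2 * (\<Sum>j<m. (norm (x - z j))\<^sup>2)"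
proof -
  have "(\<Sum>j<m. (norm (saga_dev i x z j))\<^sup>2) \<le> (\<Sum>j<m. (norm (grad i j x - grad i j (z j)))\<^sup>2)"
    unfolding saga_dev_def using sum_norm_sq_centred_le[of "{..<m}" "\<lambda>j. grad i j x - grad i j (z j)"] m_pos
    by (simp add: lessThan_empty_iff)
  also have "\<dots> \<le> (\<Sum>j<m. L\<^sup>2 * (norm (x - z j))\<^sup>2)"
  proof (intro sum_mono)
    fix j
    assume "j \<in> {..<m}"
    then have "norm (grad i j x - grad i j (z j)) \<le> L * norm (x - z j)"
      using lipschitz assms by auto
    then show "(norm (grad i j x - grad i j (z j)))\<^sup>2 \<le> L\<^sup>2 * (norm (x - z j))\<^sup>2"
      by (metis norm_ge_zero power_mono power_mult_distrib)
  qed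
  finally show ?thesis
    by (simp add: sum_distrib_left)
qed

abbreviation index_vectors :: "(nat \<Rightarrow> nat) set" where
  "index_vectors \<equiv> PiE {..<n} (\<lambda>_. {..<m})"

lemma card_index_vectors: "card index_vectors = m ^ n"
  by (simp add: card_PiE)

lemma sum_index_vectors_coord:
  assumes "i < n"
  shows "(\<Sum>u\<in>index_vectors. f (u i)) = real m ^ (n - 1) * (\<Sum>j<m. f j)"
  using sum_PiE_coord[of "{..<n}" "{..<m}" i f] assms by simp

lemma sum_saga_err_le:
  "(\<Sum>u\<in>index_vectors. saga_err grad n m z x u)
     \<le> real m ^ (n - 1) * L\<^sup>2 * (\<Sum>i<n. \<Sum>j<m. (norm (x i - z i j))\<^sup>2)"
proof -
  have "(\<Sum>u\<in>index_vectors. saga_err grad n m z x u)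
      = (\<Sum>i<n. \<Sum>u\<in>index_vectors. (norm (saga_dev i (x i) (z i) (u i)))\<^sup>2)"
    unfolding saga_err_def gvec_minus_grad_loc by (rule sum.swap)
  also have "\<dots> = (\<Sum>i<n. real m ^ (n - 1) * (\<Sum>j<m. (norm (saga_dev i (x i) (z i) j))\<^sup>2))"
    by (intro sum.cong refl sum_index_vectors_coord) auto
  also have "\<dots> \<le> (\<Sum>i<n. real m ^ (n - 1) * (L\<^sup>2 * (\<Sum>j<m. (norm (x i - z i j))\<^sup>2)))"
    by (intro sum_mono mult_left_mono sum_norm_saga_dev_sq_le) auto
  finally show ?thesis
    by (simp add: sum_distrib_left mult.assoc)
qed

lemma sum_table_update_dist:
  "(\<Sum>u\<in>index_vectors. \<Sum>i<n. \<Sum>j<m. (norm (X i - table_update x z u i j))\<^sup>2)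
    = real m ^ (n - 1) * (\<Sum>i<n. real m * (norm (X i - x i))\<^sup>2 + (real m - 1) * (\<Sum>j<m. (norm (X i - z i j))\<^sup>2))"
proof -
  have row: "(\<Sum>j'<m. \<Sum>j<m. (norm (X i - (if j = j' then x i else z i j)))\<^sup>2)
        = real m * (norm (X i - x i))\<^sup>2 + (real m - 1) * (\<Sum>j<m. (norm (X i - z i j))\<^sup>2)" for i
  proof -
    have "(\<Sum>j'<m. \<Sum>j<m. (norm (X i - (if j = j' then x i else z i j)))\<^sup>2)
        = (\<Sum>j<m. \<Sum>j'<m. (if j = j' then (norm (X i - x i))\<^sup>2 else (norm (X i - z i j))\<^sup>2))"
      by (subst sum.swap) (intro sum.cong refl, auto)
    also have "\<dots> = (\<Sum>j<m. (norm (X i - x i))\<^sup>2 + (real m - 1) * (norm (X i - z i j))\<^sup>2)"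
      by (intro sum.cong refl) (simp add: sum_if_eq_const)
    finally show ?thesis
      by (simp add: sum.distrib sum_distrib_left)
  qed
  have "(\<Sum>u\<in>index_vectors. \<Sum>i<n. \<Sum>j<m. (norm (X i - table_update x z u i j))\<^sup>2)
      = (\<Sum>i<n. \<Sum>u\<in>index_vectors. \<Sum>j<m. (norm (X i - (if j = u i then x i else z i j)))\<^sup>2)"
    unfolding table_update_def by (rule sum.swap)
  also have "\<dots> = (\<Sum>i<n. real m ^ (n - 1) * (\<Sum>j'<m. \<Sum>j<m. (norm (X i - (if j = j' then x i else z i j)))\<^sup>2))"
    by (intro sum.cong refl sum_index_vectors_coord[where f = "\<lambda>j'. \<Sum>j<m. (norm (X _ - (if j = j' then x _ else z _ j)))\<^sup>2"]) auto
  finally show ?thesis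
    by (simp add: row sum_distrib_left)
qed

text \<open>Here \<open>u2\<close> stands for \<open>s\<^sup>k\<close> and \<open>u3\<close> for \<open>\<tau>\<^sup>k\<^sup>+\<^sup>1\<close>; \<open>X\<close> is an arbitrary next iterate.\<close>

lemma sum_saga_err_table_update_le:
  fixes X x :: "nat \<Rightarrow> 'v" and z :: "nat \<Rightarrow> nat \<Rightarrow> 'v"
  shows "(\<Sum>u2\<in>index_vectors. \<Sum>u3\<in>index_vectors. saga_err grad n m (table_update x z u2) X u3)
    \<le> real m ^ (2 * n) * L\<^sup>2 * (2 * cons_err n X + 2 * cons_err n x
         + 2 * real n * (norm (avg n X - avg n x))\<^sup>2 + 2 * real n * t_gap n m x z)"
proof -
  obtain n' where n_Suc: "n = Suc n'"
    using n_pos by (cases n) auto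
  define M where "M = real m"
  have M1: "M \<ge> 1"
    using m_pos by (simp add: M_def)
  define B where "B = 2 * cons_err n X + 2 * cons_err n x + 2 * real n * (norm (avg n X - avg n x))\<^sup>2 + 2 * real n * t_gap n m x z"
  define P where "P = (\<Sum>i<n. (norm (X i - x i))\<^sup>2)"
  define Q where "Q = (\<Sum>i<n. \<Sum>j<m. (norm (X i - z i j))\<^sup>2)"
  have "P \<le> B"
  proof -
    have "real n * (norm (avg n X - avg n x))\<^sup>2 \<ge> 0" "real n * t_gap n m x z \<ge> 0"
      by (simp_all add: t_gap_nonneg)
    then show ?thesis
      using sum_norm_diff_sq_le[where n = n and X = X and x = x] cons_err_nonneg[of n X]
      unfolding P_def B_def by linarith
  qed
  moreover have "Q \<le> M * B"
  proof -
    have "Q = M * (\<Sum>i<n. (1 / real m) * (\<Sum>j<m. (norm (X i - z i j))\<^sup>2))"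
      using m_pos unfolding Q_def M_def by (simp add: sum_distrib_left)
    moreover have "(\<Sum>i<n. (1 / real m) * (\<Sum>j<m. (norm (X i - z i j))\<^sup>2)) \<le> B"
      using sum_table_dist_le[where m = m and n = n and X = X and z = z and x = x] cons_err_nonneg[of n x] m_pos
      unfolding B_def by linarith
    ultimately show ?thesis
      using M1 by (simp add: mult_left_mono)
  qed
  moreover have "(\<Sum>u2\<in>index_vectors. \<Sum>u3\<in>index_vectors. saga_err grad n m (table_update x z u2) X u3)
     \<le> M ^ (n - 1) * L\<^sup>2 * (M ^ (n - 1) * (M * P + (M - 1) * Q))"
  proof -
    have "(\<Sum>u2\<in>index_vectors. \<Sum>u3\<in>index_vectors. saga_err grad n m (table_update x z u2) X u3)
       \<le> (\<Sum>u2\<in>index_vectors. M ^ (n - 1) * L\<^sup>2 * (\<Sum>i<n. \<Sum>j<m. (norm (X i - table_update x z u2 i j))\<^sup>2))"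
      unfolding M_def by (intro sum_mono sum_saga_err_le)
    then show ?thesis
      unfolding M_def P_def Q_def
      by (simp add: sum_distrib_left[symmetric] sum_table_update_dist sum.distrib)
  qed
  ultimately have "(\<Sum>u2\<in>index_vectors. \<Sum>u3\<in>index_vectors. saga_err grad n m (table_update x z u2) X u3)
     \<le> M ^ (n - 1) * L\<^sup>2 * (M ^ (n - 1) * (M * B + (M - 1) * (M * B)))"
    using M1 by (elim order.trans) (intro mult_left_mono add_mono; simp)
  also have "\<dots> = M ^ (2 * n) * L\<^sup>2 * B"
    by (simp add: n_Suc algebra_simps power_add power2_eq_square power_mult)
  finally show ?thesis
    unfolding M_def B_def .
qed

lemma sum_saga_err_x_update_le:
  fixes x y :: "nat \<Rightarrow> 'v" and z :: "nat \<Rightarrow> nat \<Rightarrow> 'v"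
  shows "(\<Sum>u2\<in>index_vectors. \<Sum>u3\<in>index_vectors. saga_err grad n m (table_update x z u2) (x_update W n \<alpha> x y) u3)
    \<le> real m ^ (2 * n) * L\<^sup>2 * (6 * cons_err n x + 2 * real n * t_gap n m x z
         + 4 * \<alpha>\<^sup>2 * cons_err n y + 2 * real n * \<alpha>\<^sup>2 * (norm (avg n y))\<^sup>2)"
proof -
  have "2 * cons_err n (x_update W n \<alpha> x y) + 2 * cons_err n x
      + 2 * real n * (norm (avg n (x_update W n \<alpha> x y) - avg n x))\<^sup>2 + 2 * real n * t_gap n m x z
    \<le> 6 * cons_err n x + 2 * real n * t_gap n m x z + 4 * \<alpha>\<^sup>2 * cons_err n y + 2 * real n * \<alpha>\<^sup>2 * (norm (avg n y))\<^sup>2"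
    using cons_err_x_update_le[OF ds nonneg, of \<alpha> x y]
    by (simp add: avg_x_update[OF ds] power_mult_distrib)
  then show ?thesis
    by (intro order_trans[OF sum_saga_err_table_update_le] mult_left_mono) auto
qed

text \<open>The network mean of the estimators is an average of \<open>n\<close> independent centred terms.\<close>

lemma sum_mean_noise_le:
  fixes x :: "nat \<Rightarrow> 'v" and z :: "nat \<Rightarrow> nat \<Rightarrow> 'v"
  shows "(\<Sum>u\<in>index_vectors. (norm (avg n (gvec grad m z x u) - avg n (\<lambda>i. grad_loc grad m i (x i))))\<^sup>2)
    \<le> real m ^ n * L\<^sup>2 * (2 * cons_err n x + 2 * real n * t_gap n m x z) / (real n)\<^sup>2"
proof -
  obtain n' where n_Suc: "n = Suc n'"
    using n_pos by (cases n) auto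
  have mean: "avg n (gvec grad m z x u) - avg n (\<lambda>i. grad_loc grad m i (x i))
      = (1 / real n) *\<^sub>R (\<Sum>i<n. saga_dev i (x i) (z i) (u i))" for u
    unfolding avg_diff[symmetric] gvec_minus_grad_loc by (simp add: avg_def)
  have "(\<Sum>u\<in>index_vectors. (norm (avg n (gvec grad m z x u) - avg n (\<lambda>i. grad_loc grad m i (x i))))\<^sup>2)
      = (1 / real n)\<^sup>2 * (\<Sum>u\<in>index_vectors. (norm (\<Sum>i<n. saga_dev i (x i) (z i) (u i)))\<^sup>2)"
    by (simp add: mean sum_distrib_left power_divide)
  also have "(\<Sum>u\<in>index_vectors. (norm (\<Sum>i<n. saga_dev i (x i) (z i) (u i)))\<^sup>2)
      = real m ^ (n - 1) * (\<Sum>i<n. \<Sum>j<m. (norm (saga_dev i (x i) (z i) j))\<^sup>2)"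
    using sum_PiE_norm_sum_sq[of "{..<n}" "{..<m}" "\<lambda>i. saga_dev i (x i) (z i)"] sum_saga_dev by simp
  also have "(\<Sum>i<n. \<Sum>j<m. (norm (saga_dev i (x i) (z i) j))\<^sup>2)
      \<le> (\<Sum>i<n. L\<^sup>2 * (\<Sum>j<m. (norm (x i - z i j))\<^sup>2))"
    by (intro sum_mono sum_norm_saga_dev_sq_le) auto
  also have "\<dots> = real m * L\<^sup>2 * (\<Sum>i<n. (1 / real m) * (\<Sum>j<m. (norm (x i - z i j))\<^sup>2))"
    using m_pos by (simp add: sum_distrib_left)
  also have "\<dots> \<le> real m * L\<^sup>2 * (2 * cons_err n x + 2 * real n * t_gap n m x z)"
    using sum_table_dist_le[where m = m and n = n and X = x and z = z and x = x] m_pos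
    by (intro mult_left_mono) auto
  finally have "(\<Sum>u\<in>index_vectors. (norm (avg n (gvec grad m z x u) - avg n (\<lambda>i. grad_loc grad m i (x i))))\<^sup>2)
      \<le> (1 / real n)\<^sup>2 * (real m ^ (n - 1) * (real m * L\<^sup>2 * (2 * cons_err n x + 2 * real n * t_gap n m x z)))"
    by (simp add: mult_left_mono)
  also have "\<dots> = real m ^ n * L\<^sup>2 * (2 * cons_err n x + 2 * real n * t_gap n m x z) / (real n)\<^sup>2"
    by (simp add: n_Suc field_simps power2_eq_square)
  finally show ?thesis .
qed

lemma step_size_absorbs_noise:
  fixes x :: "nat \<Rightarrow> 'v" and z :: "nat \<Rightarrow> nat \<Rightarrow> 'v"
  shows "4 * real n * \<alpha>\<^sup>2 * (\<Sum>u\<in>index_vectors. (norm (avg n (gvec grad m z x u) - avg n (\<lambda>i. grad_loc grad m i (x i))))\<^sup>2)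
    \<le> real m ^ n * (cons_err n x + real n * t_gap n m x z)"
proof -
  define M where "M = real m"
  define C where "C = cons_err n x"
  define t where "t = t_gap n m x z"
  have M1: "M \<ge> 1" and n1: "real n \<ge> 1"
    using m_pos n_pos by (simp_all add: M_def)
  have "4 * real n * \<alpha>\<^sup>2 * (\<Sum>u\<in>index_vectors. (norm (avg n (gvec grad m z x u) - avg n (\<lambda>i. grad_loc grad m i (x i))))\<^sup>2)
      \<le> 4 * real n * \<alpha>\<^sup>2 * (M ^ n * L\<^sup>2 * (2 * C + 2 * real n * t) / (real n)\<^sup>2)"
    using sum_mean_noise_le[of z x] unfolding M_def C_def t_def by (intro mult_left_mono) auto
  also have "\<dots> = M ^ n * (\<alpha>\<^sup>2 * L\<^sup>2) * (8 * C + 8 * real n * t) / real n"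
    using n1 by (simp add: field_simps power2_eq_square)
  also have "\<dots> \<le> M ^ n * (real n / 8) * (8 * C + 8 * real n * t) / real n"
    using alpha_L_sq_le cons_err_nonneg[of n x] t_gap_nonneg[of n m x z] M1
    unfolding C_def t_def by (intro divide_right_mono mult_right_mono mult_left_mono) auto
  also have "\<dots> = M ^ n * (C + real n * t)"
    using n1 by (simp add: field_simps)
  finally show ?thesis
    unfolding M_def C_def t_def .
qed

lemma sum_saga_err_draw_le:
  fixes x y gp :: "nat \<Rightarrow> 'v" and z :: "nat \<Rightarrow> nat \<Rightarrow> 'v"
  assumes track: "avg n y = avg n gp"
  shows "(\<Sum>u2\<in>index_vectors. \<Sum>u3\<in>index_vectors.
      saga_err grad n m (table_update x z u2) (x_update W n \<alpha> x (y_update W n y (gvec grad m z x u) gp)) u3)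
    \<le> real m ^ (2 * n) * L\<^sup>2 * ((6 * cons_err n x + 2 * real n * t_gap n m x z
          + 4 * real n * \<alpha>\<^sup>2 * (norm (avg n (\<lambda>i. grad_loc grad m i (x i))))\<^sup>2)
        + 4 * \<alpha>\<^sup>2 * cons_err n (y_update W n y (gvec grad m z x u) gp)
        + 4 * real n * \<alpha>\<^sup>2 * (norm (avg n (gvec grad m z x u) - avg n (\<lambda>i. grad_loc grad m i (x i))))\<^sup>2)"
proof -
  have "(norm (avg n (y_update W n y (gvec grad m z x u) gp)))\<^sup>2
      \<le> 2 * (norm (avg n (\<lambda>i. grad_loc grad m i (x i))))\<^sup>2
        + 2 * (norm (avg n (gvec grad m z x u) - avg n (\<lambda>i. grad_loc grad m i (x i))))\<^sup>2"
    using norm_add_sq_le[of "avg n (\<lambda>i. grad_loc grad m i (x i))"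
        "avg n (gvec grad m z x u) - avg n (\<lambda>i. grad_loc grad m i (x i))"]
    by (simp add: avg_y_update[OF ds] track)
  then have "2 * real n * \<alpha>\<^sup>2 * (norm (avg n (y_update W n y (gvec grad m z x u) gp)))\<^sup>2
      \<le> 2 * real n * \<alpha>\<^sup>2 * (2 * (norm (avg n (\<lambda>i. grad_loc grad m i (x i))))\<^sup>2
        + 2 * (norm (avg n (gvec grad m z x u) - avg n (\<lambda>i. grad_loc grad m i (x i))))\<^sup>2)"
    by (intro mult_left_mono) auto
  then show ?thesis
    by (intro order_trans[OF sum_saga_err_x_update_le] mult_left_mono) (auto simp: algebra_simps)
qed

lemma sum_saga_err_next_le:
  fixes x y gp :: "nat \<Rightarrow> 'v" and z :: "nat \<Rightarrow> nat \<Rightarrow> 'v"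
  assumes track: "avg n y = avg n gp"
  defines "y' u \<equiv> y_update W n y (gvec grad m z x u) gp"
  shows "(\<Sum>u1\<in>index_vectors. \<Sum>u2\<in>index_vectors. \<Sum>u3\<in>index_vectors.
            saga_err grad n m (table_update x z u2) (x_update W n \<alpha> x (y' u1)) u3)
    \<le> real m ^ (3 * n) * saga_err_bound grad n m \<alpha> L x z
      + 4 * \<alpha>\<^sup>2 * L\<^sup>2 * (real m ^ (2 * n) * (\<Sum>u\<in>index_vectors. cons_err n (y' u)))"
proof -
  define M where "M = real m"
  define C where "C = cons_err n x"
  define t where "t = t_gap n m x z"
  define G where "G = (norm (avg n (\<lambda>i. grad_loc grad m i (x i))))\<^sup>2"
  define E where "E u = (norm (avg n (gvec grad m z x u) - avg n (\<lambda>i. grad_loc grad m i (x i))))\<^sup>2" for u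
  define Y where "Y u = cons_err n (y' u)" for u
  have M1: "M \<ge> 1"
    using m_pos by (simp add: M_def)
  have M3: "M ^ (3 * n) = M ^ n * M ^ (2 * n)"
    by (simp add: power_add[symmetric])
  have noise: "4 * real n * \<alpha>\<^sup>2 * (\<Sum>u\<in>index_vectors. E u) \<le> M ^ n * (C + real n * t)"
    unfolding E_def M_def C_def t_def by (rule step_size_absorbs_noise)
  have "(\<Sum>u1\<in>index_vectors. \<Sum>u2\<in>index_vectors. \<Sum>u3\<in>index_vectors.
            saga_err grad n m (table_update x z u2) (x_update W n \<alpha> x (y' u1)) u3)
      \<le> (\<Sum>u\<in>index_vectors. M ^ (2 * n) * L\<^sup>2 * ((6 * C + 2 * real n * t + 4 * real n * \<alpha>\<^sup>2 * G)
            + 4 * \<alpha>\<^sup>2 * Y u + 4 * real n * \<alpha>\<^sup>2 * E u))"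
    unfolding M_def C_def t_def G_def E_def Y_def y'_def
    by (intro sum_mono sum_saga_err_draw_le[OF track])
  also have "\<dots> = M ^ (2 * n) * L\<^sup>2 * (M ^ n * (6 * C + 2 * real n * t + 4 * real n * \<alpha>\<^sup>2 * G)
      + 4 * \<alpha>\<^sup>2 * (\<Sum>u\<in>index_vectors. Y u) + 4 * real n * \<alpha>\<^sup>2 * (\<Sum>u\<in>index_vectors. E u))"
    by (simp add: sum.distrib sum_distrib_left[symmetric] card_index_vectors M_def)
  also have "\<dots> \<le> M ^ (2 * n) * L\<^sup>2 * (M ^ n * (6 * C + 2 * real n * t + 4 * real n * \<alpha>\<^sup>2 * G)
      + 4 * \<alpha>\<^sup>2 * (\<Sum>u\<in>index_vectors. Y u) + M ^ n * (C + real n * t))"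
    using noise M1 by (intro mult_left_mono add_mono) auto
  also have "\<dots> = M ^ (3 * n) * (L\<^sup>2 * (7 * C + 3 * real n * t + 4 * real n * \<alpha>\<^sup>2 * G))
      + 4 * \<alpha>\<^sup>2 * L\<^sup>2 * (M ^ (2 * n) * (\<Sum>u\<in>index_vectors. Y u))"
    unfolding M3 by (simp add: algebra_simps)
  also have "\<dots> \<le> M ^ (3 * n) * saga_err_bound grad n m \<alpha> L x z
      + 4 * \<alpha>\<^sup>2 * L\<^sup>2 * (M ^ (2 * n) * (\<Sum>u\<in>index_vectors. Y u))"
  proof -
    have "L\<^sup>2 * C \<ge> 0" "L\<^sup>2 * (real n * t) \<ge> 0" "L\<^sup>2 * (real n * (\<alpha>\<^sup>2 * G)) \<ge> 0"
      using cons_err_nonneg[of n x] t_gap_nonneg[of n m x z] unfolding C_def t_def G_def by auto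
    then have "L\<^sup>2 * (7 * C + 3 * real n * t + 4 * real n * \<alpha>\<^sup>2 * G) \<le> saga_err_bound grad n m \<alpha> L x z"
      unfolding saga_err_bound_def C_def[symmetric] t_def[symmetric] G_def[symmetric] by (simp add: algebra_simps)
    then show ?thesis
      using M1 by (simp add: mult_left_mono)
  qed
  finally show ?thesis
    unfolding M_def Y_def .
qed

lemma sum_est_err_resampled_le:
  "(\<Sum>u1\<in>index_vectors. \<Sum>u2\<in>index_vectors. \<Sum>u3\<in>index_vectors.
       est_err grad W n m \<alpha> x0 k (T(k := u1, Suc k := u3)) (S(k := u2)))
    \<le> real m ^ (3 * n) * saga_err_bound grad n m \<alpha> L (gt_x grad W n m \<alpha> x0 T S k) (gt_z grad W n m \<alpha> x0 T S k)
      + 4 * \<alpha>\<^sup>2 * L\<^sup>2 * (real m ^ (2 * n) * (\<Sum>u\<in>index_vectors. track_err grad W n m \<alpha> x0 k (T(k := u)) S))"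
proof -
  define x where "x = gt_x grad W n m \<alpha> x0 T S k"
  define y where "y = gt_y grad W n m \<alpha> x0 T S k"
  define gp where "gp = gt_g_prev grad W n m \<alpha> x0 T S k"
  define z where "z = gt_z grad W n m \<alpha> x0 T S k"
  have "gt_x grad W n m \<alpha> x0 T' S' k = x \<and> gt_y grad W n m \<alpha> x0 T' S' k = y
      \<and> gt_g_prev grad W n m \<alpha> x0 T' S' k = gp \<and> gt_z grad W n m \<alpha> x0 T' S' k = z"
    if "\<forall>t<k. T' t = T t \<and> S' t = S t" for T' S'
    unfolding x_def y_def gp_def z_def using gt_prefix[OF that, of grad W n m \<alpha> x0] by simp
  then have est: "est_err grad W n m \<alpha> x0 k (T(k := u1, Suc k := u3)) (S(k := u2))
      = saga_err grad n m (table_update x z u2)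
          (x_update W n \<alpha> x (y_update W n y (gvec grad m z x u1) gp)) u3"
    and track: "track_err grad W n m \<alpha> x0 k (T(k := u)) S = cons_err n (y_update W n y (gvec grad m z x u) gp)"
    for u u1 u2 u3
    by (simp_all add: est_err_def track_err_def gt_Suc gt_g_def)
  have "avg n y = avg n gp"
    unfolding y_def gp_def by (rule avg_gt_y[OF ds])
  then show ?thesis
    unfolding est track x_def[symmetric] z_def[symmetric] by (rule sum_saga_err_next_le)
qed

end

section \<open>Functions of finitely many discrete random variables\<close>

lemma measurable_restrict_count_space:
  fixes X :: "'j \<Rightarrow> 'w \<Rightarrow> nat"
  assumes fin: "finite J" and meas: "\<And>j. j \<in> J \<Longrightarrow> X j \<in> measurable N (count_space UNIV)"
  shows "(\<lambda>\<omega>. restrict (\<lambda>j. X j \<omega>) J) \<in> measurable N (count_space (PiE J (\<lambda>_. UNIV)))"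
proof (subst measurable_count_space_eq_countable)
  show "countable (PiE J (\<lambda>_. UNIV :: nat set))"
    using fin by (intro countable_PiE) auto
  have "(\<lambda>\<omega>. restrict (\<lambda>j. X j \<omega>) J) -` {a} \<inter> space N \<in> sets N" if a: "a \<in> PiE J (\<lambda>_. UNIV)" for a
  proof -
    have "(\<lambda>\<omega>. restrict (\<lambda>j. X j \<omega>) J) -` {a} \<inter> space N = {\<omega>\<in>space N. \<forall>j\<in>J. X j \<omega> = a j}"
      using a by (auto simp: restrict_def PiE_def extensional_def fun_eq_iff)
    moreover have "{\<omega>\<in>space N. X j \<omega> = a j} \<in> sets N" if "j \<in> J" for j
      using measurable_sets[OF meas[OF that], of "{a j}"] by (simp add: vimage_def Int_def conj_commute)
    ultimately show ?thesis
      using fin by (cases "J = {}") (auto intro: sets.sets_Collect_finite_All')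
  qed
  then show "(\<lambda>\<omega>. restrict (\<lambda>j. X j \<omega>) J) \<in> space N \<rightarrow> PiE J (\<lambda>_. UNIV) \<and>
    (\<forall>a\<in>PiE J (\<lambda>_. UNIV). (\<lambda>\<omega>. restrict (\<lambda>j. X j \<omega>) J) -` {a} \<inter> space N \<in> sets N)"
    by auto
qed

lemma measurable_function_of_finitely_many:
  fixes X :: "'j \<Rightarrow> 'w \<Rightarrow> nat" and \<Phi> :: "'w \<Rightarrow> real"
  assumes "finite J" "\<And>j. j \<in> J \<Longrightarrow> X j \<in> measurable N (count_space UNIV)"
    and eq: "\<And>\<omega>. \<omega> \<in> space N \<Longrightarrow> \<Phi> \<omega> = G (restrict (\<lambda>j. X j \<omega>) J)"
  shows "\<Phi> \<in> borel_measurable N"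
proof -
  have "(\<lambda>\<omega>. G (restrict (\<lambda>j. X j \<omega>) J)) \<in> borel_measurable N"
    by (rule measurable_compose[OF measurable_restrict_count_space[OF assms(1,2)]]) auto
  then show ?thesis
    using eq by (subst measurable_cong) auto
qed

text \<open>On the almost sure event that all \<open>X j\<close> lie below \<open>m\<close>, \<open>\<Phi>\<close> takes only finitely
  many values.\<close>

lemma integrable_function_of_finitely_many:
  fixes X :: "'j \<Rightarrow> 'w \<Rightarrow> nat" and \<Phi> :: "'w \<Rightarrow> real"
  assumes "finite_measure N" "finite J" "\<And>j. j \<in> J \<Longrightarrow> X j \<in> measurable N (count_space UNIV)"
    and eq: "\<And>\<omega>. \<omega> \<in> space N \<Longrightarrow> \<Phi> \<omega> = G (restrict (\<lambda>j. X j \<omega>) J)"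
    and ae: "AE \<omega> in N. \<forall>j\<in>J. X j \<omega> < m"
  shows "integrable N \<Phi>"
proof -
  interpret finite_measure N by (rule assms(1))
  define B where "B = (\<Sum>v\<in>PiE J (\<lambda>_. {..<m}). \<bar>G v\<bar>)"
  have bound: "AE \<omega> in N. norm (\<Phi> \<omega>) \<le> norm B"
    using ae AE_space
  proof eventually_elim
    case (elim \<omega>)
    then have "restrict (\<lambda>j. X j \<omega>) J \<in> PiE J (\<lambda>_. {..<m})"
      by auto
    then have "\<bar>G (restrict (\<lambda>j. X j \<omega>) J)\<bar> \<le> B"
      unfolding B_def using assms(2) by (intro member_le_sum) (auto intro!: finite_PiE)
    then show ?case
      using eq[OF elim(2)] by simp
  qed
  have "\<Phi> \<in> borel_measurable N"
    by (rule measurable_function_of_finitely_many[where G = G, OF assms(2,3) eq])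
  then show ?thesis
    by (rule Bochner_Integration.integrable_bound[OF integrable_const _ bound])
qed

lemma AE_less_of_uniform:
  fixes Y :: "'w \<Rightarrow> nat"
  assumes "Y \<in> measurable N (count_space UNIV)"
    and "distr N (count_space UNIV) Y = measure_pmf (pmf_of_set {..<m})" and "m \<ge> 1"
  shows "AE \<omega> in N. Y \<omega> < m"
proof -
  have "set_pmf (pmf_of_set {..<m}) = {..<m}"
    using assms(3) by (intro set_pmf_of_set) (auto simp: lessThan_empty_iff)
  then have "AE x in distr N (count_space UNIV) Y. x < m"
    unfolding assms(2) using AE_measure_pmf[of "pmf_of_set {..<m}"] by simp
  then show ?thesis
    by (rule AE_distrD[OF assms(1)])
qed

lemma real_cond_exp_indicator_indep:
  assumes "sigma_finite_subalgebra M F" "finite_measure M" "E \<in> sets M"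
    and indep: "\<And>A. A \<in> sets F \<Longrightarrow> measure M (A \<inter> E) = measure M A * measure M E"
  shows "AE \<omega> in M. real_cond_exp M F (indicator E) \<omega> = measure M E"
proof -
  interpret sigma_finite_subalgebra M F by (rule assms(1))
  interpret finite_measure M by (rule assms(2))
  show ?thesis
  proof (rule real_cond_exp_charact)
    fix A
    assume A: "A \<in> sets F"
    then have AM: "A \<in> sets M"
      using subalg by (auto simp: subalgebra_def)
    have "(\<integral>x\<in>A. indicator E x \<partial>M) = measure M (A \<inter> E)"
      using AM assms(3) unfolding set_lebesgue_integral_def
      by (simp add: indicator_inter_arith[symmetric] mult.commute)
    also have "\<dots> = (\<integral>x\<in>A. measure M E \<partial>M)"
      using AM by (simp add: indep[OF A] set_integral_const)
    finally show "(\<integral>x\<in>A. indicator E x \<partial>M) = (\<integral>x\<in>A. measure M E \<partial>M)" .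
  qed (use assms(3) in \<open>auto simp: emeasure_finite less_top[symmetric]\<close>)
qed

lemma real_cond_exp_sum_indicator_indep:
  fixes f :: "'u \<Rightarrow> 'w \<Rightarrow> real"
  assumes sf: "sigma_finite_subalgebra M F" and fm: "finite_measure M" and "finite U"
    and E: "\<And>u. E u \<in> sets M"
    and indep: "\<And>u A. A \<in> sets F \<Longrightarrow> measure M (A \<inter> E u) = measure M A * measure M (E u)"
    and f_meas: "\<And>u. f u \<in> borel_measurable F" and f_int: "\<And>u. integrable M (f u)"
    and g_meas: "g \<in> borel_measurable M"
    and g_eq: "AE \<omega> in M. g \<omega> = (\<Sum>u\<in>U. f u \<omega> * indicator (E u) \<omega>)"
  shows "AE \<omega> in M. real_cond_exp M F g \<omega> = (\<Sum>u\<in>U. f u \<omega> * measure M (E u))"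
proof -
  interpret sigma_finite_subalgebra M F by (rule sf)
  have int: "integrable M (\<lambda>\<omega>. f u \<omega> * indicator (E u) \<omega>)" for u
    using integrable_mult_indicator[OF E f_int] by (simp add: mult.commute)
  have "(\<lambda>\<omega>. \<Sum>u\<in>U. f u \<omega> * indicator (E u) \<omega>) \<in> borel_measurable M"
    by (rule borel_measurable_sum) (rule borel_measurable_integrable[OF int])
  with g_eq g_meas
  have "AE \<omega> in M. real_cond_exp M F g \<omega> = real_cond_exp M F (\<lambda>\<omega>. \<Sum>u\<in>U. f u \<omega> * indicator (E u) \<omega>) \<omega>"
    by (rule real_cond_exp_cong)
  moreover have "AE \<omega> in M. real_cond_exp M F (\<lambda>\<omega>. \<Sum>u\<in>U. f u \<omega> * indicator (E u) \<omega>) \<omega>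
      = (\<Sum>u\<in>U. real_cond_exp M F (\<lambda>\<omega>. f u \<omega> * indicator (E u) \<omega>) \<omega>)"
    using int by (rule real_cond_exp_sum)
  moreover have "AE \<omega> in M. \<forall>u\<in>U. real_cond_exp M F (\<lambda>\<omega>. f u \<omega> * indicator (E u) \<omega>) \<omega> = f u \<omega> * measure M (E u)"
  proof (rule eventually_ball_finite[OF \<open>finite U\<close>], intro ballI)
    fix u
    have "AE \<omega> in M. real_cond_exp M F (\<lambda>\<omega>. f u \<omega> * indicator (E u) \<omega>) \<omega> = f u \<omega> * real_cond_exp M F (indicator (E u)) \<omega>"
      by (rule real_cond_exp_mult[OF f_meas borel_measurable_indicator[OF E] int])
    moreover have "AE \<omega> in M. real_cond_exp M F (indicator (E u)) \<omega> = measure M (E u)"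
      by (rule real_cond_exp_indicator_indep[OF sf fm E indep])
    ultimately show "AE \<omega> in M. real_cond_exp M F (\<lambda>\<omega>. f u \<omega> * indicator (E u) \<omega>) \<omega> = f u \<omega> * measure M (E u)"
      by eventually_elim simp
  qed
  ultimately show ?thesis
    by eventually_elim simp
qed

section \<open>The probability model\<close>

locale gt_saga_prob = gt_saga grad W n m \<alpha> L
  for grad :: "nat \<Rightarrow> nat \<Rightarrow> 'v::euclidean_space \<Rightarrow> 'v" and W n m \<alpha> L +
  fixes M :: "'w measure" and tau s :: "nat \<Rightarrow> nat \<Rightarrow> 'w \<Rightarrow> nat" and x0 :: 'v and k :: nat
  assumes prob: "prob_space M"
    and distr_tau: "\<And>t i. i < n \<Longrightarrow> distr M (count_space UNIV) (tau t i) = measure_pmf (pmf_of_set {..<m})"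
    and distr_s: "\<And>t i. i < n \<Longrightarrow> distr M (count_space UNIV) (s t i) = measure_pmf (pmf_of_set {..<m})"
    and indep: "prob_space.indep_vars M (\<lambda>_. count_space UNIV)
           (\<lambda>(b, t, i). if b then tau t i else s t i) (UNIV \<times> UNIV \<times> {..<n})"
begin

sublocale P: prob_space M
  by (rule prob)

abbreviation index_var :: "bool \<times> nat \<times> nat \<Rightarrow> 'w \<Rightarrow> nat" where
  "index_var \<equiv> (\<lambda>(b, t, i). if b then tau t i else s t i)"

lemma measurable_index_var: "i < n \<Longrightarrow> index_var (b, t, i) \<in> measurable M (count_space UNIV)"
  using indep unfolding P.indep_vars_def2 by auto

lemma measurable_tau: "i < n \<Longrightarrow> tau t i \<in> measurable M (count_space UNIV)"
  using measurable_index_var[of i True t] by simp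

lemma measurable_s: "i < n \<Longrightarrow> s t i \<in> measurable M (count_space UNIV)"
  using measurable_index_var[of i False t] by simp

lemma distr_index_var:
  "i < n \<Longrightarrow> distr M (count_space UNIV) (index_var (b, t, i)) = measure_pmf (pmf_of_set {..<m})"
  using distr_tau distr_s by (cases b) auto

lemma AE_index_var_less:
  assumes "finite J" "J \<subseteq> UNIV \<times> UNIV \<times> {..<n}"
  shows "AE \<omega> in M. \<forall>j\<in>J. index_var j \<omega> < m"
proof (rule eventually_ball_finite[OF assms(1)], intro ballI)
  fix j
  assume "j \<in> J"
  then obtain b t i where j: "j = (b, t, i)" "i < n"
    using assms(2) by auto
  show "AE \<omega> in M. index_var j \<omega> < m"
    unfolding j(1) by (rule AE_less_of_uniform[OF measurable_index_var[OF j(2)] distr_index_var[OF j(2)] m_pos])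
qed

abbreviation past_events :: "'w set set" where
  "past_events \<equiv> (\<Union>t<k. \<Union>i<n. {tau t i -` A \<inter> space M | A. True} \<union> {s t i -` A \<inter> space M | A. True})"

lemma sets_filt: "sets (filt M tau s n k) = sigma_sets (space M) past_events"
  unfolding filt_def by (rule sets_measure_of) auto

lemma space_filt: "space (filt M tau s n k) = space M"
  unfolding filt_def by (simp add: space_measure_of_conv)

lemma past_events_sets: "past_events \<subseteq> sets M"
proof
  fix a
  assume "a \<in> past_events"
  then obtain t i A where i: "i < n" and "a = tau t i -` A \<inter> space M \<or> a = s t i -` A \<inter> space M"
    by auto
  then show "a \<in> sets M"
    using measurable_sets[OF measurable_tau[OF i], of A] measurable_sets[OF measurable_s[OF i], of A] by auto
qed

lemma sigma_finite_subalgebra_filt: "sigma_finite_subalgebra M (filt M tau s n k)"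
proof -
  have "subalgebra M (filt M tau s n k)"
    unfolding subalgebra_def space_filt sets_filt using sets.sigma_sets_subset[OF past_events_sets] by simp
  then have "finite_measure_subalgebra M (filt M tau s n k)"
    using prob unfolding prob_space_def finite_measure_subalgebra_def finite_measure_subalgebra_axioms_def by simp
  then show ?thesis
    by (rule finite_measure_subalgebra_is_sigma_finite)
qed

lemma measurable_index_var_filt:
  assumes "j \<in> UNIV \<times> {..<k} \<times> {..<n}"
  shows "index_var j \<in> measurable (filt M tau s n k) (count_space UNIV)"
proof (rule measurableI)
  fix A :: "nat set"
  obtain b t i where j: "j = (b, t, i)" "t < k" "i < n"
    using assms by auto
  then have "index_var j -` A \<inter> space M \<in> {tau t i -` A \<inter> space M | A. True} \<union> {s t i -` A \<inter> space M | A. True}"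
    by (cases b) auto
  then have "index_var j -` A \<inter> space M \<in> past_events"
    using j(2,3) by (intro UN_I) auto
  then show "index_var j -` A \<inter> space (filt M tau s n k) \<in> sets (filt M tau s n k)"
    unfolding space_filt sets_filt by auto
qed auto

text \<open>The fresh randomness of step \<open>k\<close> consists of \<open>\<tau>\<^sup>k\<close>, \<open>s\<^sup>k\<close> and \<open>\<tau>\<^sup>k\<^sup>+\<^sup>1\<close>; a triple
  \<open>(u1, u2, u3)\<close> of index vectors fixes their values.\<close>

definition fresh_index :: "(bool \<times> nat \<times> nat) set" where
  "fresh_index = ({True} \<times> {k, Suc k} \<times> {..<n}) \<union> ({False} \<times> {k} \<times> {..<n})"

definition fresh_value :: "(nat \<Rightarrow> nat) \<times> (nat \<Rightarrow> nat) \<times> (nat \<Rightarrow> nat) \<Rightarrow> bool \<times> nat \<times> nat \<Rightarrow> nat" where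
  "fresh_value u j = (case j of (b, t, i) \<Rightarrow> if b then (if t = k then fst u i else snd (snd u) i) else fst (snd u) i)"

definition fresh_event :: "(nat \<Rightarrow> nat) \<times> (nat \<Rightarrow> nat) \<times> (nat \<Rightarrow> nat) \<Rightarrow> 'w set" where
  "fresh_event u = {\<omega> \<in> space M. \<forall>i<n. tau k i \<omega> = fst u i \<and> s k i \<omega> = fst (snd u) i \<and> tau (Suc k) i \<omega> = snd (snd u) i}"

lemma mem_fresh_index:
  "j \<in> fresh_index \<longleftrightarrow> (\<exists>i<n. j = (True, k, i) \<or> j = (True, Suc k, i) \<or> j = (False, k, i))"
  unfolding fresh_index_def by auto

lemma fresh_index_finite: "finite fresh_index"
  unfolding fresh_index_def by auto

lemma fresh_index_nonempty: "fresh_index \<noteq> {}"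
  using n_pos unfolding fresh_index_def by (auto simp: lessThan_empty_iff)

lemma fresh_index_subset: "fresh_index \<subseteq> UNIV \<times> UNIV \<times> {..<n}"
  unfolding fresh_index_def by auto

lemma card_fresh_index: "card fresh_index = 3 * n"
proof -
  have "card fresh_index = card ({True} \<times> {k, Suc k} \<times> {..<n}) + card ({False} \<times> {k} \<times> {..<n})"
    unfolding fresh_index_def by (rule card_Un_disjoint) auto
  then show ?thesis
    by (simp add: card_cartesian_product)
qed

lemma fresh_event_eq_INT: "fresh_event u = (\<Inter>j\<in>fresh_index. index_var j -` {fresh_value u j} \<inter> space M)"
proof (intro set_eqI iffI)
  fix \<omega>
  assume \<omega>: "\<omega> \<in> fresh_event u"
  show "\<omega> \<in> (\<Inter>j\<in>fresh_index. index_var j -` {fresh_value u j} \<inter> space M)"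
  proof (rule INT_I)
    fix j
    assume "j \<in> fresh_index"
    then obtain i where "i < n" "j = (True, k, i) \<or> j = (True, Suc k, i) \<or> j = (False, k, i)"
      unfolding mem_fresh_index by blast
    then show "\<omega> \<in> index_var j -` {fresh_value u j} \<inter> space M"
      using \<omega> unfolding fresh_event_def by (elim disjE) (simp_all add: fresh_value_def)
  qed
next
  fix \<omega>
  assume \<omega>: "\<omega> \<in> (\<Inter>j\<in>fresh_index. index_var j -` {fresh_value u j} \<inter> space M)"
  have "index_var j \<omega> = fresh_value u j" if "j \<in> fresh_index" for j
    using \<omega> that by blast
  then have "index_var (True, k, i) \<omega> = fresh_value u (True, k, i)"
      "index_var (False, k, i) \<omega> = fresh_value u (False, k, i)"
      "index_var (True, Suc k, i) \<omega> = fresh_value u (True, Suc k, i)" if "i < n" for i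
    using that unfolding mem_fresh_index by blast+
  then have "tau k i \<omega> = fst u i \<and> s k i \<omega> = fst (snd u) i \<and> tau (Suc k) i \<omega> = snd (snd u) i" if "i < n" for i
    using that by (simp add: fresh_value_def)
  moreover have "\<omega> \<in> space M"
    using \<omega> fresh_index_nonempty by auto
  ultimately show "\<omega> \<in> fresh_event u"
    unfolding fresh_event_def by auto
qed

lemma sets_fresh_event: "fresh_event u \<in> sets M"
proof -
  have "index_var j -` {fresh_value u j} \<inter> space M \<in> sets M" if j: "j \<in> fresh_index" for j
  proof -
    obtain b t i where "j = (b, t, i)" "i < n"
      using j fresh_index_subset by (cases j) auto
    then show ?thesis
      using measurable_sets[OF measurable_index_var] by simp
  qed
  then show ?thesis
    unfolding fresh_event_eq_INT by (intro sets.finite_INT fresh_index_finite fresh_index_nonempty)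
qed

abbreviation fresh_vectors where
  "fresh_vectors \<equiv> index_vectors \<times> index_vectors \<times> index_vectors"

lemma prob_fresh_event:
  assumes u: "u \<in> fresh_vectors"
  shows "P.prob (fresh_event u) = (1 / real m) ^ (3 * n)"
proof -
  have "P.prob (fresh_event u) = (\<Prod>j\<in>fresh_index. P.prob (index_var j -` {fresh_value u j} \<inter> space M))"
    unfolding fresh_event_eq_INT
    by (rule P.indep_varsD[OF indep fresh_index_nonempty fresh_index_finite fresh_index_subset]) simp
  also have "\<dots> = (\<Prod>j\<in>fresh_index. 1 / real m)"
  proof (intro prod.cong refl)
    fix j
    assume "j \<in> fresh_index"
    then obtain b t i where j: "j = (b, t, i)" "i < n" and "(b \<and> t = k) \<or> (b \<and> t = Suc k) \<or> (\<not> b \<and> t = k)"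
      unfolding mem_fresh_index by auto
    moreover have "fst u i < m" "fst (snd u) i < m" "snd (snd u) i < m"
      using u j(2) by (auto simp: mem_Times_iff PiE_iff)
    ultimately have "fresh_value u j < m"
      unfolding fresh_value_def by auto
    then have "measure (distr M (count_space UNIV) (index_var j)) {fresh_value u j} = 1 / real m"
      using m_pos unfolding j(1) distr_index_var[OF j(2)]
      by (simp add: measure_pmf_single pmf_of_set lessThan_empty_iff)
    then show "P.prob (index_var j -` {fresh_value u j} \<inter> space M) = 1 / real m"
      unfolding j(1) using measurable_index_var[OF j(2)] by (subst (asm) measure_distr) auto
  qed
  also have "\<dots> = (1 / real m) ^ (3 * n)"
    using card_fresh_index by simp
  finally show ?thesis .
qed

definition index_sigma :: "bool \<times> nat \<times> nat \<Rightarrow> 'w set set" where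
  "index_sigma j = sigma_sets (space M) {index_var j -` B \<inter> space M | B. B \<in> sets (count_space UNIV)}"

definition generated_by :: "(bool \<times> nat \<times> nat) set \<Rightarrow> 'w set set" where
  "generated_by J = sigma_sets (space M) (\<Union>j\<in>J. index_sigma j)"

lemma index_sigma_pow: "{index_var j -` B \<inter> space M | B. B \<in> sets (count_space UNIV)} \<subseteq> Pow (space M)"
  by auto

lemma indep_past_fresh:
  "P.indep_sets (\<lambda>b. generated_by (if b then UNIV \<times> {..<k} \<times> {..<n} else fresh_index)) UNIV"
  unfolding generated_by_def
proof (rule P.indep_sets_collect_sigma)
  have "P.indep_sets index_sigma (UNIV \<times> UNIV \<times> {..<n})"
    using indep unfolding P.indep_vars_def index_sigma_def by auto
  then show "P.indep_sets index_sigma (\<Union>b. if b then UNIV \<times> {..<k} \<times> {..<n} else fresh_index)"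
    by (rule P.indep_sets_mono_index[rotated]) (auto simp: fresh_index_def)
  show "Int_stable (index_sigma j)" for j
  proof -
    interpret sigma_algebra "space M" "index_sigma j"
      unfolding index_sigma_def by (rule sigma_algebra_sigma_sets[OF index_sigma_pow])
    show ?thesis
      unfolding Int_stable_def by auto
  qed
  show "disjoint_family_on (\<lambda>b. if b then UNIV \<times> {..<k} \<times> {..<n} else fresh_index) UNIV"
    unfolding disjoint_family_on_def fresh_index_def by auto
qed

lemma sets_filt_subset_generated_by_past: "sets (filt M tau s n k) \<subseteq> generated_by (UNIV \<times> {..<k} \<times> {..<n})"
proof -
  have "past_events \<subseteq> (\<Union>j\<in>UNIV \<times> {..<k} \<times> {..<n}. index_sigma j)"
  proof
    fix a
    assume "a \<in> past_events"
    then obtain t i B where ti: "t < k" "i < n" and "a = tau t i -` B \<inter> space M \<or> a = s t i -` B \<inter> space M"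
      by blast
    then have "a \<in> index_sigma (True, t, i) \<or> a \<in> index_sigma (False, t, i)"
      unfolding index_sigma_def by (auto intro: sigma_sets.Basic)
    then show "a \<in> (\<Union>j\<in>UNIV \<times> {..<k} \<times> {..<n}. index_sigma j)"
      using ti by blast
  qed
  then show ?thesis
    unfolding sets_filt generated_by_def
    by (intro sigma_sets_mono order_trans[OF _ sigma_sets_superset_generator])
qed

lemma fresh_event_generated_by_fresh: "fresh_event u \<in> generated_by fresh_index"
proof -
  have "(\<Union>j\<in>fresh_index. index_sigma j) \<subseteq> Pow (space M)"
    unfolding index_sigma_def using sigma_sets_into_sp[OF index_sigma_pow] by blast
  then interpret sigma_algebra "space M" "generated_by fresh_index"
    unfolding generated_by_def by (rule sigma_algebra_sigma_sets)
  show ?thesis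
    unfolding fresh_event_eq_INT
  proof (rule finite_INT[OF fresh_index_finite fresh_index_nonempty])
    fix j
    assume "j \<in> fresh_index"
    then have "index_var j -` {fresh_value u j} \<inter> space M \<in> (\<Union>j\<in>fresh_index. index_sigma j)"
      unfolding index_sigma_def by (intro UN_I sigma_sets.Basic) auto
    then show "index_var j -` {fresh_value u j} \<inter> space M \<in> generated_by fresh_index"
      unfolding generated_by_def by (rule sigma_sets.Basic)
  qed
qed

text \<open>The fresh indices are disjoint from those generating \<open>\<F>\<^sup>k\<close>, so independence of all
  indices makes \<open>\<F>\<^sup>k\<close> independent of each fresh event.\<close>

lemma indep_fresh_event:
  assumes "A \<in> sets (filt M tau s n k)"
  shows "P.prob (A \<inter> fresh_event u) = P.prob A * P.prob (fresh_event u)"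
proof -
  have "P.prob (\<Inter>b\<in>UNIV. if b then A else fresh_event u) = (\<Prod>b\<in>UNIV. P.prob (if b then A else fresh_event u))"
    using assms sets_filt_subset_generated_by_past fresh_event_generated_by_fresh
    by (intro P.indep_setsD[OF indep_past_fresh]) auto
  then show ?thesis
    by (simp add: UNIV_bool Int_commute)
qed

abbreviation tau_seq :: "'w \<Rightarrow> nat \<Rightarrow> nat \<Rightarrow> nat" where
  "tau_seq \<omega> \<equiv> (\<lambda>t i. tau t i \<omega>)"

abbreviation s_seq :: "'w \<Rightarrow> nat \<Rightarrow> nat \<Rightarrow> nat" where
  "s_seq \<omega> \<equiv> (\<lambda>t i. s t i \<omega>)"

definition resampled ::
    "((nat \<Rightarrow> nat \<Rightarrow> nat) \<Rightarrow> (nat \<Rightarrow> nat \<Rightarrow> nat) \<Rightarrow> real) \<Rightarrow> (nat \<Rightarrow> nat) \<times> (nat \<Rightarrow> nat) \<times> (nat \<Rightarrow> nat) \<Rightarrow> 'w \<Rightarrow> real"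
  where "resampled G u \<omega> = G ((tau_seq \<omega>)(k := fst u, Suc k := snd (snd u))) ((s_seq \<omega>)(k := fst (snd u)))"

text \<open>\<open>G\<close> is a quantity of the run that depends only on the indices drawn by the nodes
  up to \<open>\<tau>\<^sup>k\<^sup>+\<^sup>1\<close> and \<open>s\<^sup>k\<close>.\<close>

context
  fixes G :: "(nat \<Rightarrow> nat \<Rightarrow> nat) \<Rightarrow> (nat \<Rightarrow> nat \<Rightarrow> nat) \<Rightarrow> real"
  assumes G_cong: "\<And>T S T' S'. \<forall>t<Suc k. \<forall>i<n. T t i = T' t i \<and> S t i = S' t i
      \<Longrightarrow> \<forall>i<n. T (Suc k) i = T' (Suc k) i \<Longrightarrow> G T S = G T' S'"
begin

lemma resampled_eq_function_of_past:
  "resampled G u \<omega> = G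
     ((\<lambda>t i. restrict (\<lambda>j. index_var j \<omega>) (UNIV \<times> {..<k} \<times> {..<n}) (True, t, i))(k := fst u, Suc k := snd (snd u)))
     ((\<lambda>t i. restrict (\<lambda>j. index_var j \<omega>) (UNIV \<times> {..<k} \<times> {..<n}) (False, t, i))(k := fst (snd u)))"
  unfolding resampled_def by (rule G_cong) auto

lemma measurable_resampled: "resampled G u \<in> borel_measurable (filt M tau s n k)"
proof (rule measurable_function_of_finitely_many[where J = "UNIV \<times> {..<k} \<times> {..<n}" and X = index_var])
  show "index_var j \<in> measurable (filt M tau s n k) (count_space UNIV)" if "j \<in> UNIV \<times> {..<k} \<times> {..<n}" for j
    using that by (rule measurable_index_var_filt)
qed (simp, rule resampled_eq_function_of_past)

lemma integrable_resampled: "integrable M (resampled G u)"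
proof (rule integrable_function_of_finitely_many[where J = "UNIV \<times> {..<k} \<times> {..<n}" and X = index_var and m = m])
  show "index_var j \<in> measurable M (count_space UNIV)" if "j \<in> UNIV \<times> {..<k} \<times> {..<n}" for j
    using that measurable_index_var by auto
  show "AE \<omega> in M. \<forall>j\<in>UNIV \<times> {..<k} \<times> {..<n}. index_var j \<omega> < m"
    by (rule AE_index_var_less) auto
qed (rule P.finite_measure, simp, rule resampled_eq_function_of_past)

lemma measurable_run_quantity: "(\<lambda>\<omega>. G (tau_seq \<omega>) (s_seq \<omega>)) \<in> borel_measurable M"
proof (rule measurable_function_of_finitely_many[where J = "UNIV \<times> {..<Suc (Suc k)} \<times> {..<n}" and X = index_var])
  show "index_var j \<in> measurable M (count_space UNIV)" if "j \<in> UNIV \<times> {..<Suc (Suc k)} \<times> {..<n}" for j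
    using that measurable_index_var by auto
  show "G (tau_seq \<omega>) (s_seq \<omega>) = G (\<lambda>t i. restrict (\<lambda>j. index_var j \<omega>) (UNIV \<times> {..<Suc (Suc k)} \<times> {..<n}) (True, t, i))
      (\<lambda>t i. restrict (\<lambda>j. index_var j \<omega>) (UNIV \<times> {..<Suc (Suc k)} \<times> {..<n}) (False, t, i))" for \<omega>
    by (rule G_cong) auto
qed simp

lemma run_quantity_eq_sum_fresh:
  "AE \<omega> in M. G (tau_seq \<omega>) (s_seq \<omega>) = (\<Sum>u\<in>fresh_vectors. resampled G u \<omega> * indicator (fresh_event u) \<omega>)"
proof -
  have "AE \<omega> in M. \<forall>j\<in>UNIV \<times> {..<Suc (Suc k)} \<times> {..<n}. index_var j \<omega> < m"
    by (rule AE_index_var_less) auto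
  with AE_space show ?thesis
  proof eventually_elim
  case (elim \<omega>)
  have lt: "tau k i \<omega> < m" "s k i \<omega> < m" "tau (Suc k) i \<omega> < m" if "i < n" for i
    using bspec[OF elim(2), of "(True, k, i)"] bspec[OF elim(2), of "(False, k, i)"]
      bspec[OF elim(2), of "(True, Suc k, i)"] that by auto
  define u\<omega> where "u\<omega> = (restrict (tau_seq \<omega> k) {..<n}, restrict (s_seq \<omega> k) {..<n}, restrict (tau_seq \<omega> (Suc k)) {..<n})"
  have u\<omega>: "u\<omega> \<in> fresh_vectors"
    unfolding u\<omega>_def using lt by auto
  have "\<omega> \<in> fresh_event u \<longleftrightarrow> u = u\<omega>" if u: "u \<in> fresh_vectors" for u
  proof
    assume e: "\<omega> \<in> fresh_event u"
    obtain u1 u2 u3 where u123: "u = (u1, u2, u3)"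
      by (cases u) auto
    have p: "u1 \<in> index_vectors" "u2 \<in> index_vectors" "u3 \<in> index_vectors"
      using u unfolding u123 by auto
    have eq: "u1 i = tau k i \<omega>" "u2 i = s k i \<omega>" "u3 i = tau (Suc k) i \<omega>" if "i < n" for i
      using e that unfolding fresh_event_def u123 by auto
    have "u1 = restrict (tau_seq \<omega> k) {..<n}"
      by (rule PiE_ext[OF p(1)]) (use eq lt in auto)
    moreover have "u2 = restrict (s_seq \<omega> k) {..<n}"
      by (rule PiE_ext[OF p(2)]) (use eq lt in auto)
    moreover have "u3 = restrict (tau_seq \<omega> (Suc k)) {..<n}"
      by (rule PiE_ext[OF p(3)]) (use eq lt in auto)
    ultimately show "u = u\<omega>"
      unfolding u123 u\<omega>_def by simp
  next
    assume "u = u\<omega>"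
    then show "\<omega> \<in> fresh_event u"
      using elim(1) unfolding fresh_event_def u\<omega>_def by auto
  qed
  then have "(\<Sum>u\<in>fresh_vectors. resampled G u \<omega> * indicator (fresh_event u) \<omega>)
      = (\<Sum>u\<in>fresh_vectors. if u = u\<omega> then resampled G u \<omega> else 0)"
    by (intro sum.cong) auto
  also have "\<dots> = resampled G u\<omega> \<omega>"
    using u\<omega> by (simp add: finite_PiE)
  also have "\<dots> = G (tau_seq \<omega>) (s_seq \<omega>)"
    unfolding resampled_def u\<omega>_def by (rule G_cong) auto
  finally show ?case
    by simp
qed
qed

lemma cond_exp_run_quantity:
  "AE \<omega> in M. real_cond_exp M (filt M tau s n k) (\<lambda>\<omega>. G (tau_seq \<omega>) (s_seq \<omega>)) \<omega>
     = (1 / real m) ^ (3 * n) * (\<Sum>u\<in>fresh_vectors. resampled G u \<omega>)"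
proof -
  have "AE \<omega> in M. real_cond_exp M (filt M tau s n k) (\<lambda>\<omega>. G (tau_seq \<omega>) (s_seq \<omega>)) \<omega>
      = (\<Sum>u\<in>fresh_vectors. resampled G u \<omega> * measure M (fresh_event u))"
    by (rule real_cond_exp_sum_indicator_indep[OF sigma_finite_subalgebra_filt P.finite_measure _ sets_fresh_event
          indep_fresh_event measurable_resampled integrable_resampled measurable_run_quantity run_quantity_eq_sum_fresh])
      (simp add: finite_PiE)
  then show ?thesis
    by eventually_elim (simp add: prob_fresh_event sum_distrib_left mult.commute)
qed

end

lemma sum_resampled_est_err_le:
  "(\<Sum>u\<in>fresh_vectors. resampled (est_err grad W n m \<alpha> x0 k) u \<omega>)
    \<le> real m ^ (3 * n) * saga_err_bound grad n m \<alpha> L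
          (gt_x grad W n m \<alpha> x0 (tau_seq \<omega>) (s_seq \<omega>) k) (gt_z grad W n m \<alpha> x0 (tau_seq \<omega>) (s_seq \<omega>) k)
      + 4 * \<alpha>\<^sup>2 * L\<^sup>2 * (\<Sum>u\<in>fresh_vectors. resampled (track_err grad W n m \<alpha> x0 k) u \<omega>)"
proof -
  have triple: "(\<Sum>u\<in>fresh_vectors. f u) = (\<Sum>u1\<in>index_vectors. \<Sum>u2\<in>index_vectors. \<Sum>u3\<in>index_vectors. f (u1, u2, u3))"
    for f :: "_ \<Rightarrow> real"
    by (simp add: sum.cartesian_product split_def)
  have "track_err grad W n m \<alpha> x0 k ((tau_seq \<omega>)(k := u1, Suc k := u3)) ((s_seq \<omega>)(k := u2))
      = track_err grad W n m \<alpha> x0 k ((tau_seq \<omega>)(k := u1)) (s_seq \<omega>)" for u1 u2 u3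
    by (rule track_err_cong) auto
  then have "(\<Sum>u\<in>fresh_vectors. resampled (track_err grad W n m \<alpha> x0 k) u \<omega>)
      = real m ^ (2 * n) * (\<Sum>u\<in>index_vectors. track_err grad W n m \<alpha> x0 k ((tau_seq \<omega>)(k := u)) (s_seq \<omega>))"
    by (simp add: triple resampled_def card_index_vectors sum_distrib_left mult_2 power_add mult.assoc)
  then show ?thesis
    unfolding triple resampled_def by (simp add: sum_est_err_resampled_le)
qed

lemma cond_exp_est_err_le:
  "AE \<omega> in M. real_cond_exp M (filt M tau s n k) (\<lambda>\<omega>. est_err grad W n m \<alpha> x0 k (tau_seq \<omega>) (s_seq \<omega>)) \<omega>
     \<le> saga_err_bound grad n m \<alpha> L
          (gt_x grad W n m \<alpha> x0 (tau_seq \<omega>) (s_seq \<omega>) k) (gt_z grad W n m \<alpha> x0 (tau_seq \<omega>) (s_seq \<omega>) k)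
       + 4 * \<alpha>\<^sup>2 * L\<^sup>2 * real_cond_exp M (filt M tau s n k) (\<lambda>\<omega>. track_err grad W n m \<alpha> x0 k (tau_seq \<omega>) (s_seq \<omega>)) \<omega>"
proof -
  have p: "(1 / real m) ^ (3 * n) * real m ^ (3 * n) = 1"
    using m_pos by (simp add: power_mult_distrib[symmetric])
  have "AE \<omega> in M. real_cond_exp M (filt M tau s n k) (\<lambda>\<omega>. est_err grad W n m \<alpha> x0 k (tau_seq \<omega>) (s_seq \<omega>)) \<omega>
      = (1 / real m) ^ (3 * n) * (\<Sum>u\<in>fresh_vectors. resampled (est_err grad W n m \<alpha> x0 k) u \<omega>)"
    by (rule cond_exp_run_quantity) (rule est_err_cong)
  moreover have "AE \<omega> in M. real_cond_exp M (filt M tau s n k) (\<lambda>\<omega>. track_err grad W n m \<alpha> x0 k (tau_seq \<omega>) (s_seq \<omega>)) \<omega>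
      = (1 / real m) ^ (3 * n) * (\<Sum>u\<in>fresh_vectors. resampled (track_err grad W n m \<alpha> x0 k) u \<omega>)"
    by (rule cond_exp_run_quantity) (rule track_err_cong; auto)
  ultimately show ?thesis
  proof eventually_elim
    case (elim \<omega>)
    have "(1 / real m) ^ (3 * n) * (\<Sum>u\<in>fresh_vectors. resampled (est_err grad W n m \<alpha> x0 k) u \<omega>)
        \<le> ((1 / real m) ^ (3 * n) * real m ^ (3 * n)) * saga_err_bound grad n m \<alpha> L
              (gt_x grad W n m \<alpha> x0 (tau_seq \<omega>) (s_seq \<omega>) k) (gt_z grad W n m \<alpha> x0 (tau_seq \<omega>) (s_seq \<omega>) k)
          + 4 * \<alpha>\<^sup>2 * L\<^sup>2 * ((1 / real m) ^ (3 * n) * (\<Sum>u\<in>fresh_vectors. resampled (track_err grad W n m \<alpha> x0 k) u \<omega>))"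
      using mult_left_mono[OF sum_resampled_est_err_le[of \<omega>], of "(1 / real m) ^ (3 * n)"]
      by (simp add: algebra_simps)
    then show ?case
      unfolding elim(1,2) p by simp
  qed
qed

end

theorem lemma6:
  fixes M :: "'w measure"
    and tau s :: "nat \<Rightarrow> nat \<Rightarrow> 'w \<Rightarrow> nat"
    and f :: "nat \<Rightarrow> nat \<Rightarrow> 'v::euclidean_space \<Rightarrow> real"
    and grad :: "nat \<Rightarrow> nat \<Rightarrow> 'v \<Rightarrow> 'v"
    and W :: "nat \<Rightarrow> nat \<Rightarrow> real"
    and n m :: nat and L \<alpha> :: real and x0 :: 'v and k :: nat
  assumes "prob_space M"
    and "n \<ge> 1" and "m \<ge> 1"
    and "\<And>i j x. i < n \<Longrightarrow> j < m \<Longrightarrow> (f i j has_derivative (\<lambda>h. grad i j x \<bullet> h)) (at x)"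
    and "L > 0"
    and "\<And>i j x y. i < n \<Longrightarrow> j < m \<Longrightarrow> norm (grad i j x - grad i j y) \<le> L * norm (x - y)"
    and "bdd_below (range (\<lambda>x. (1 / real n) * (\<Sum>i<n. (1 / real m) * (\<Sum>j<m. f i j x))))"
    and "nonneg_mat n W" and "primitive_mat n W" and "doubly_stochastic n W"
    and "\<And>t i. i < n \<Longrightarrow> distr M (count_space UNIV) (tau t i) = measure_pmf (pmf_of_set {..<m})"
    and "\<And>t i. i < n \<Longrightarrow> distr M (count_space UNIV) (s t i) = measure_pmf (pmf_of_set {..<m})"
    and "prob_space.indep_vars M (\<lambda>_. count_space UNIV)
           (\<lambda>(b, t, i). if b then tau t i else s t i) (UNIV \<times> UNIV \<times> {..<n})"
    and "\<alpha> > 0" and "\<alpha> \<le> sqrt (real n) / (sqrt (8 * real m) * L)"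
  shows "AE \<omega> in M.
     real_cond_exp M (filt M tau s n k)
       (\<lambda>\<omega>. \<Sum>i<n. (norm (gt_g grad W n m \<alpha> x0 (\<lambda>t i. tau t i \<omega>) (\<lambda>t i. s t i \<omega>) (Suc k) i
                     - grad_loc grad m i (gt_x grad W n m \<alpha> x0 (\<lambda>t i. tau t i \<omega>) (\<lambda>t i. s t i \<omega>) (Suc k) i)))\<^sup>2) \<omega>
     \<le> 8.5 * L\<^sup>2 * cons_err n (gt_x grad W n m \<alpha> x0 (\<lambda>t i. tau t i \<omega>) (\<lambda>t i. s t i \<omega>) k)
       + 4 * real n * L\<^sup>2 * t_gap n m (gt_x grad W n m \<alpha> x0 (\<lambda>t i. tau t i \<omega>) (\<lambda>t i. s t i \<omega>) k)
                                   (gt_z grad W n m \<alpha> x0 (\<lambda>t i. tau t i \<omega>) (\<lambda>t i. s t i \<omega>) k)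
       + 6 * real n * \<alpha>\<^sup>2 * L\<^sup>2 * (norm (avg n (\<lambda>i. grad_loc grad m i
                     (gt_x grad W n m \<alpha> x0 (\<lambda>t i. tau t i \<omega>) (\<lambda>t i. s t i \<omega>) k i))))\<^sup>2
       + 4 * \<alpha>\<^sup>2 * L\<^sup>2 * real_cond_exp M (filt M tau s n k)
           (\<lambda>\<omega>. cons_err n (gt_y grad W n m \<alpha> x0 (\<lambda>t i. tau t i \<omega>) (\<lambda>t i. s t i \<omega>) (Suc k))) \<omega>"
proof -
  interpret gt_saga_prob grad W n m \<alpha> L M tau s x0 k
    by (intro gt_saga_prob.intro gt_saga.intro gt_saga_prob_axioms.intro) (use assms in auto)
  show ?thesis
    using cond_exp_est_err_le
    unfolding est_err_def track_err_def saga_err_def saga_err_bound_def gt_g_def by simp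
qed

end
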